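(* There exists an Orlicz function $\Phi$ such that the Orlicz space $L_\Phi$ is $(1-DH)$ but fails to be uniformly $(1-DH)$. Moreover, there is no constant $c>0$ such that for every sequence of pairwise disjoint measurable sets $E_n\subset[0,1]$ of positive measure there is a subsequence $(E_{n_k})$ satisfying $\big\|\sum_{k=1}^m\bar\chi_{E_{n_k}}\big\|_{L_\Phi}\ge cm$ for all $m=1,2,\dots$.
   Context: An Orlicz function is an increasing convex function on $[0,\infty)$ vanishing at $0$ and tending to $\infty$. $L_\Phi$ is the Orlicz space on $[0,1]$ with Luxemburg norm $\|f\|_{L_\Phi}=\inf\{\lambda>0:\int_0^1\Phi(|f|/\lambda)\le1\}$; $\bar\chi_A:=\chi_A/\|\chi_A\|_{L_\Phi}$. $L_\Phi$ is $(1-DH)$ if every sequence of pairwise disjoint norm-one elements has a subsequence equivalent to the unit vector basis of $\ell_1$; it is uniformly $(1-DH)$ if there is a constant $C$ such that this subsequence can always be chosen $C$-equivalent ($C^{-1}\|\sum c_kx_k\|\le\|\sum c_ky_k\|\le C\|\sum c_kx_k\|$) to the unit vector basis of $\ell_1$. *)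

theory Defs
  imports "HOL-Analysis.Analysis"
begin

definition orlicz_function :: "(real \<Rightarrow> real) \<Rightarrow> bool" where
  "orlicz_function \<Phi> \<longleftrightarrow> mono_on {0..} \<Phi> \<and> convex_on {0..} \<Phi> \<and> \<Phi> 0 = 0
     \<and> filterlim \<Phi> at_top at_top"

abbreviation I01 :: "real measure" where
  "I01 \<equiv> lebesgue_on {0..1}"

definition orlicz_modular :: "(real \<Rightarrow> real) \<Rightarrow> (real \<Rightarrow> real) \<Rightarrow> real \<Rightarrow> ennreal" where
  "orlicz_modular \<Phi> f lam = (\<integral>\<^sup>+ x. ennreal (\<Phi> (\<bar>f x\<bar> / lam)) \<partial>I01)"

definition orlicz_space :: "(real \<Rightarrow> real) \<Rightarrow> (real \<Rightarrow> real) set" where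
  "orlicz_space \<Phi> = {f. f \<in> borel_measurable I01 \<and> (\<exists>lam>0. orlicz_modular \<Phi> f lam \<le> 1)}"

definition lux_norm :: "(real \<Rightarrow> real) \<Rightarrow> (real \<Rightarrow> real) \<Rightarrow> real" where
  "lux_norm \<Phi> f = Inf {lam. lam > 0 \<and> orlicz_modular \<Phi> f lam \<le> 1}"

definition chi_bar :: "(real \<Rightarrow> real) \<Rightarrow> real set \<Rightarrow> real \<Rightarrow> real" where
  "chi_bar \<Phi> A = (\<lambda>x. indicator A x / lux_norm \<Phi> (indicator A))"

definition l1_equiv :: "(real \<Rightarrow> real) \<Rightarrow> (nat \<Rightarrow> real \<Rightarrow> real) \<Rightarrow> real \<Rightarrow> bool" where
  "l1_equiv \<Phi> x C \<longleftrightarrow> (\<forall>(m::nat) (c::nat \<Rightarrow> real).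
      (1 / C) * (\<Sum>k<m. \<bar>c k\<bar>) \<le> lux_norm \<Phi> (\<lambda>t. \<Sum>k<m. c k * x k t)
    \<and> lux_norm \<Phi> (\<lambda>t. \<Sum>k<m. c k * x k t) \<le> C * (\<Sum>k<m. \<bar>c k\<bar>))"

definition disj_normalized :: "(real \<Rightarrow> real) \<Rightarrow> (nat \<Rightarrow> real \<Rightarrow> real) \<Rightarrow> bool" where
  "disj_normalized \<Phi> f \<longleftrightarrow>
     (\<forall>n. f n \<in> orlicz_space \<Phi> \<and> lux_norm \<Phi> (f n) = 1)
   \<and> (\<forall>n m. n \<noteq> m \<longrightarrow> (AE x in I01. f n x = 0 \<or> f m x = 0))"

definition one_DH :: "(real \<Rightarrow> real) \<Rightarrow> bool" where
  "one_DH \<Phi> \<longleftrightarrow> (\<forall>f. disj_normalized \<Phi> f \<longrightarrow>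
      (\<exists>r C. strict_mono r \<and> C > 0 \<and> l1_equiv \<Phi> (f \<circ> r) C))"

definition uniform_one_DH :: "(real \<Rightarrow> real) \<Rightarrow> bool" where
  "uniform_one_DH \<Phi> \<longleftrightarrow> (\<exists>C>0. \<forall>f. disj_normalized \<Phi> f \<longrightarrow>
      (\<exists>r. strict_mono r \<and> l1_equiv \<Phi> (f \<circ> r) C))"

end

theory Submission
  imports Defs
begin

text \<open>
  \<open>Phi0\<close> is piecewise linear and its slope doubles at every breakpoint \<open>2^e\<close>, where \<open>e\<close> runs
  through a union of clusters: the \<open>j\<close>-th cluster consists of \<open>q\<close> exponents spaced \<open>q\<close> apart,
  placed far beyond all earlier ones, and every size \<open>q\<close> occurs infinitely often.
  Then \<open>Phi0 (t s) \<ge> t / 4 / 2^w * Phi0 (2 s)\<close>, where \<open>w\<close> counts the breakpoints in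
  \<open>[t s / 2, 2 s)\<close>; far out such a window meets a single cluster, so \<open>w \<le> q\<close>, and even
  \<open>w \<le> 1\<close> when \<open>2^q \<ge> 4 / t\<close>. For a disjoint normalized sequence either clusters of some bounded
  size or the large clusters keep carrying a fixed part of the modular, so the modular of
  \<open>f n / 2^k\<close> is at least \<open>\<kappa> / 2^k\<close> for infinitely many \<open>n\<close>, with \<open>\<kappa>\<close> independent of \<open>k\<close>;
  a diagonal subsequence is then equivalent to the unit vector basis of \<open>l1\<close>.

  Uniformity fails inside the clusters: across a cluster of size \<open>q\<close> the slope grows by the
  factor \<open>2^q\<close>, so normalized indicators placed just beyond clusters of size \<open>q\<close>
  have tiny modular at scale \<open>2^(q^2 + 2)\<close>, and about \<open>2^(q^2 + 2) / c\<close> of them have sum of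
  norm below \<open>c m\<close>.
\<close>

definition index_in :: "nat set \<Rightarrow> nat \<Rightarrow> nat" where
  "index_in E e = card (E \<inter> {..<e})"

definition breakpoints :: "nat set \<Rightarrow> real \<Rightarrow> nat set" where
  "breakpoints E s = {e\<in>E. (2::real)^e < s}"

text \<open>Piecewise linear, with slope \<open>2^i\<close> after the \<open>i\<close>-th breakpoint \<open>2^e\<close>, \<open>e \<in> E\<close>.\<close>
definition doubling_orlicz :: "nat set \<Rightarrow> real \<Rightarrow> real" where
  "doubling_orlicz E s = s + (\<Sum>e\<in>breakpoints E s. 2^(index_in E e) * (s - 2^e))"

lemma of_nat_less_two_power: "real e < (2::real)^e"
  by (metis less_exp of_nat_less_iff of_nat_numeral of_nat_power)

lemma breakpoint_less:
  assumes "e \<in> breakpoints E s" "s \<le> real K"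
  shows "e < K"
proof -
  have "(2::real)^e < s" using assms(1) by (simp add: breakpoints_def)
  with assms(2) of_nat_less_two_power[of e] show ?thesis by linarith
qed

lemma breakpoints_subset_lessThan: "breakpoints E s \<subseteq> {..<nat \<lceil>s\<rceil>}"
  using breakpoint_less[of _ E s "nat \<lceil>s\<rceil>"] real_nat_ceiling_ge[of s] by blast

lemma finite_breakpoints [simp]: "finite (breakpoints E s)"
  using breakpoints_subset_lessThan finite_subset by blast

lemma breakpoints_mono: "s \<le> s' \<Longrightarrow> breakpoints E s \<subseteq> breakpoints E s'"
  by (auto simp: breakpoints_def)

lemma sum_two_power_index:
  fixes D :: "nat set"
  shows "(\<Sum>e\<in>D \<inter> {..<n}. (2::real)^(card (D \<inter> {..<e}))) = 2^(card (D \<inter> {..<n})) - 1"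
proof (induct n)
  case (Suc n)
  show ?case
  proof (cases "n \<in> D")
    case True
    have eq: "D \<inter> {..<Suc n} = insert n (D \<inter> {..<n})" using True by auto
    have "card (D \<inter> {..<Suc n}) = Suc (card (D \<inter> {..<n}))" unfolding eq by simp
    then show ?thesis unfolding eq using Suc by (simp add: algebra_simps)
  next
    case False
    then have "D \<inter> {..<Suc n} = D \<inter> {..<n}" by (auto simp: less_Suc_eq)
    then show ?thesis using Suc by simp
  qed
qed simp

lemma sum_two_power_index_breakpoints:
  "(\<Sum>e\<in>breakpoints E s. (2::real)^(index_in E e)) = 2^(card (breakpoints E s)) - 1"
proof -
  define D where "D = breakpoints E s"
  obtain n where n: "D \<subseteq> {..<n}" using finite_nat_iff_bounded[of D] by (auto simp: D_def)
  have "E \<inter> {..<e} = D \<inter> {..<e}" if "e \<in> D" for e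
    using that less_trans[OF power_strict_increasing[of _ e "2::real"]]
    by (auto simp: D_def breakpoints_def)
  then have "(\<Sum>e\<in>D. (2::real)^(index_in E e)) = (\<Sum>e\<in>D \<inter> {..<n}. 2^(card (D \<inter> {..<e})))"
    using n by (intro sum.cong) (auto simp: index_in_def)
  also have "\<dots> = 2^(card (D \<inter> {..<n})) - 1" by (rule sum_two_power_index)
  also have "D \<inter> {..<n} = D" using n by auto
  finally show ?thesis unfolding D_def .
qed

lemma doubling_orlicz_eq_hinge_sum:
  assumes "s \<le> real K"
  shows "doubling_orlicz E s = s + (\<Sum>e\<in>E \<inter> {..<K}. 2^(index_in E e) * max 0 (s - 2^e))"
proof -
  have sub: "breakpoints E s \<subseteq> E \<inter> {..<K}"
    using breakpoint_less[OF _ assms] by (auto simp: breakpoints_def)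
  have "(\<Sum>e\<in>breakpoints E s. (2::real)^(index_in E e) * (s - 2^e))
      = (\<Sum>e\<in>E \<inter> {..<K}. 2^(index_in E e) * max 0 (s - 2^e))"
    by (rule sum.mono_neutral_cong_left) (use sub in \<open>auto simp: breakpoints_def\<close>)
  then show ?thesis unfolding doubling_orlicz_def by simp
qed

lemma hinge_convex:
  assumes "0 \<le> t" "t \<le> 1"
  shows "max 0 ((1-t)*x + t*y - b) \<le> (1-t) * max 0 (x - b) + t * max (0::real) (y - b)"
proof -
  have "(1-t)*x + t*y - b = (1-t)*(x-b) + t*(y-b)" by (simp add: algebra_simps)
  moreover have "(1-t)*(x-b) \<le> (1-t) * max 0 (x-b)" "t*(y-b) \<le> t * max 0 (y-b)"
    using assms by (intro mult_left_mono; simp)+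
  ultimately show ?thesis using assms by auto
qed

lemma doubling_orlicz_0 [simp]: "doubling_orlicz E 0 = 0"
  by (simp add: doubling_orlicz_def breakpoints_def not_less)

lemma doubling_orlicz_ge: "s \<le> doubling_orlicz E s"
  unfolding doubling_orlicz_def by (auto intro!: sum_nonneg simp: breakpoints_def)

lemma doubling_orlicz_increment:
  assumes "x \<le> y"
  shows "y - x \<le> doubling_orlicz E y - doubling_orlicz E x"
proof -
  define K where "K = nat \<lceil>y\<rceil>"
  have Ky: "y \<le> real K" unfolding K_def by linarith
  have Kx: "x \<le> real K" using Ky assms by linarith
  have "(\<Sum>e\<in>E \<inter> {..<K}. (2::real)^(index_in E e) * max 0 (x - 2^e))
      \<le> (\<Sum>e\<in>E \<inter> {..<K}. (2::real)^(index_in E e) * max 0 (y - 2^e))"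
    using assms by (intro sum_mono mult_left_mono) auto
  then show ?thesis
    unfolding doubling_orlicz_eq_hinge_sum[OF Ky] doubling_orlicz_eq_hinge_sum[OF Kx] by linarith
qed

lemma doubling_orlicz_mono: "mono (doubling_orlicz E)"
proof (rule monoI)
  fix x y :: real
  assume "x \<le> y"
  then show "doubling_orlicz E x \<le> doubling_orlicz E y" using doubling_orlicz_increment[of x y E] by linarith
qed

lemma doubling_orlicz_strict_mono: "x < y \<Longrightarrow> doubling_orlicz E x < doubling_orlicz E y"
  using doubling_orlicz_increment[of x y E] by linarith

lemma doubling_orlicz_pos: "0 < s \<Longrightarrow> 0 < doubling_orlicz E s"
  using doubling_orlicz_ge[of s E] by linarith

lemma doubling_orlicz_nonneg: "0 \<le> s \<Longrightarrow> 0 \<le> doubling_orlicz E s"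
  using doubling_orlicz_ge[of s E] by linarith

lemma doubling_orlicz_convex: "convex_on UNIV (doubling_orlicz E)"
proof (rule convex_onI)
  fix t x y :: real assume t: "0 < t" "t < 1"
  define K where "K = nat \<lceil>max x y\<rceil>"
  define H where "H z = (\<Sum>e\<in>E \<inter> {..<K}. (2::real)^(index_in E e) * max 0 (z - 2^e))" for z
  have Kx: "x \<le> real K" and Ky: "y \<le> real K" unfolding K_def by linarith+
  have "(1-t)*x + t*y \<le> (1-t)*K + t*K" using t Kx Ky by (intro add_mono mult_left_mono) auto
  then have Kz: "(1-t)*x + t*y \<le> real K" by (simp add: algebra_simps)
  have "H ((1-t)*x + t*y)
     \<le> (\<Sum>e\<in>E \<inter> {..<K}. (1-t) * (2^(index_in E e) * max 0 (x - 2^e)) + t * (2^(index_in E e) * max 0 (y - 2^e)))"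
    unfolding H_def
  proof (rule sum_mono)
    fix e
    have "(2::real)^(index_in E e) * max 0 ((1-t)*x + t*y - 2^e)
        \<le> 2^(index_in E e) * ((1-t) * max 0 (x - 2^e) + t * max 0 (y - 2^e))"
      using hinge_convex[of t x y "2^e"] t by (intro mult_left_mono) auto
    then show "(2::real)^(index_in E e) * max 0 ((1-t)*x + t*y - 2^e)
        \<le> (1-t) * (2^(index_in E e) * max 0 (x - 2^e)) + t * (2^(index_in E e) * max 0 (y - 2^e))"
      by (simp add: algebra_simps)
  qed
  also have "\<dots> = (1-t) * H x + t * H y" by (simp add: H_def sum.distrib sum_distrib_left)
  finally have "H ((1-t)*x + t*y) \<le> (1-t) * H x + t * H y" .
  moreover have z: "(1 - t) *\<^sub>R x + t *\<^sub>R y = (1-t)*x + t*y" by simp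
  ultimately show "doubling_orlicz E ((1 - t) *\<^sub>R x + t *\<^sub>R y) \<le> (1 - t) * doubling_orlicz E x + t * doubling_orlicz E y"
    unfolding z doubling_orlicz_eq_hinge_sum[OF Kx] doubling_orlicz_eq_hinge_sum[OF Ky]
      doubling_orlicz_eq_hinge_sum[OF Kz] H_def[symmetric]
    by (simp add: algebra_simps)
qed auto

lemma doubling_orlicz_subhomogeneous:
  "0 \<le> t \<Longrightarrow> t \<le> 1 \<Longrightarrow> doubling_orlicz E (t * x) \<le> t * doubling_orlicz E x"
  using convex_onD[OF doubling_orlicz_convex, of t 0 x] by simp

lemma doubling_orlicz_le: "0 \<le> s \<Longrightarrow> doubling_orlicz E s \<le> s * 2^(card (breakpoints E s))"
proof -
  assume "0 \<le> s"
  have "(\<Sum>e\<in>breakpoints E s. 2^(index_in E e) * (s - 2^e)) \<le> (\<Sum>e\<in>breakpoints E s. (2::real)^(index_in E e) * s)"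
    by (intro sum_mono mult_left_mono) auto
  also have "\<dots> = s * (2^(card (breakpoints E s)) - 1)"
    using sum_two_power_index_breakpoints[of E s] by (simp add: sum_distrib_left[symmetric] mult.commute)
  finally show ?thesis unfolding doubling_orlicz_def by (simp add: algebra_simps)
qed

lemma doubling_orlicz_ge_breakpoints:
  assumes "0 \<le> x" "x \<le> s"
  shows "(s - x) * 2^(card (breakpoints E x)) \<le> doubling_orlicz E s"
proof -
  have "(\<Sum>e\<in>breakpoints E x. 2^(index_in E e) * (s - x)) \<le> (\<Sum>e\<in>breakpoints E x. (2::real)^(index_in E e) * (s - 2^e))"
    by (intro sum_mono mult_left_mono) (auto simp: breakpoints_def)
  also have "\<dots> \<le> (\<Sum>e\<in>breakpoints E s. 2^(index_in E e) * (s - 2^e))"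
    by (rule sum_mono2[OF finite_breakpoints breakpoints_mono[OF assms(2)]]) (auto simp: breakpoints_def)
  finally have "(s - x) * (2^(card (breakpoints E x)) - 1) \<le> (\<Sum>e\<in>breakpoints E s. 2^(index_in E e) * (s - 2^e))"
    using sum_two_power_index_breakpoints[of E x] by (simp add: sum_distrib_left[symmetric] mult.commute)
  with assms show ?thesis unfolding doubling_orlicz_def by (simp add: algebra_simps)
qed

lemma card_breakpoints_split:
  assumes "x \<le> s"
  shows "card (breakpoints E s) = card (breakpoints E x) + card {e\<in>E. x \<le> 2^e \<and> (2::real)^e < s}"
proof -
  have "breakpoints E s = breakpoints E x \<union> {e\<in>E. x \<le> 2^e \<and> (2::real)^e < s}"
    using assms by (auto simp: breakpoints_def)
  moreover have "finite {e\<in>E. x \<le> 2^e \<and> (2::real)^e < s}"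
    by (rule finite_subset[OF _ finite_breakpoints[of E s]]) (auto simp: breakpoints_def)
  moreover have "breakpoints E x \<inter> {e\<in>E. x \<le> 2^e \<and> (2::real)^e < s} = {}"
    by (auto simp: breakpoints_def)
  ultimately show ?thesis by (simp add: card_Un_disjoint)
qed

lemma sum_disjoint_support:
  fixes g :: "nat \<Rightarrow> real" and F :: "real \<Rightarrow> 'b::comm_monoid_add"
  assumes "\<forall>k<m. \<forall>k'<m. k \<noteq> k' \<longrightarrow> g k = 0 \<or> g k' = 0" "F 0 = 0"
  shows "F (\<Sum>k<m. g k) = (\<Sum>k<m. F (g k))"
proof (cases "\<exists>k0<m. g k0 \<noteq> 0")
  case True
  then obtain k0 where k0: "k0 < m" "g k0 \<noteq> 0" by auto
  have "g k = 0" if "k < m" "k \<noteq> k0" for k using assms(1) k0 that by blast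
  then have "(\<Sum>k<m. g k) = g k0" "(\<Sum>k<m. F (g k)) = F (g k0)"
    using k0 assms(2) by (auto intro!: sum.neutral simp: sum.remove[of "{..<m}" k0])
  then show ?thesis by simp
next
  case False
  then show ?thesis using assms(2) by simp
qed

lemma AE_pairwise:
  assumes "\<And>n m. n \<noteq> m \<Longrightarrow> AE x in M. P n m x"
  shows "AE x in M. \<forall>n::nat. \<forall>m::nat. n \<noteq> m \<longrightarrow> P n m x"
proof -
  have "\<forall>n m. AE x in M. n \<noteq> m \<longrightarrow> P n m x"
    using assms by (metis (mono_tags, lifting) AE_I2 eventually_mono)
  then show ?thesis by (simp add: AE_all_countable)
qed

lemma disj_normalizedD:
  assumes "disj_normalized \<Phi> g"
  shows "g k \<in> borel_measurable I01" "lux_norm \<Phi> (g k) = 1" "\<exists>l>0. orlicz_modular \<Phi> (g k) l \<le> 1"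
    and "AE x in I01. \<forall>n m. n \<noteq> m \<longrightarrow> g n x = 0 \<or> g m x = 0"
  using assms by (auto simp: disj_normalized_def orlicz_space_def intro!: AE_pairwise)

lemma disj_normalized_subseq:
  assumes "disj_normalized \<Phi> g" "strict_mono r"
  shows "disj_normalized \<Phi> (g \<circ> r)"
  using assms strict_mono_eq[OF assms(2)] by (auto simp: disj_normalized_def)

text \<open>Every Orlicz function has these properties; only they are needed for the norm estimates.\<close>
locale starshaped_orlicz =
  fixes \<Phi> :: "real \<Rightarrow> real"
  assumes mono: "mono \<Phi>" and zero: "\<Phi> 0 = 0"
    and subhomogeneous: "\<And>t x. 0 \<le> t \<Longrightarrow> t \<le> 1 \<Longrightarrow> 0 \<le> x \<Longrightarrow> \<Phi> (t * x) \<le> t * \<Phi> x"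
begin

lemma nonneg: "0 \<le> x \<Longrightarrow> 0 \<le> \<Phi> x"
  using mono zero by (metis monoD)

lemma modular_integrand_measurable:
  "f \<in> borel_measurable I01 \<Longrightarrow> (\<lambda>x. ennreal (\<Phi> (\<bar>f x\<bar> / l))) \<in> borel_measurable I01"
proof -
  assume "f \<in> borel_measurable I01"
  then have "(\<lambda>x. \<bar>f x\<bar> / l) \<in> borel_measurable I01" by measurable
  then show ?thesis
    using measurable_compose[OF _ borel_measurable_mono[OF mono]] by measurable
qed

lemma modular_antimono:
  assumes "0 < l1" "l1 \<le> l2"
  shows "orlicz_modular \<Phi> f l2 \<le> orlicz_modular \<Phi> f l1"
  unfolding orlicz_modular_def
proof (rule nn_integral_mono)
  fix x
  have "\<bar>f x\<bar> / l2 \<le> \<bar>f x\<bar> / l1" using assms by (intro divide_left_mono) auto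
  then show "ennreal (\<Phi> (\<bar>f x\<bar> / l2)) \<le> ennreal (\<Phi> (\<bar>f x\<bar> / l1))"
    using mono by (intro ennreal_leI) (auto dest: monoD)
qed

lemma modular_le_scaled:
  assumes "0 < l1" "l1 \<le> l2" and f: "f \<in> borel_measurable I01"
  shows "orlicz_modular \<Phi> f l2 \<le> ennreal (l1/l2) * orlicz_modular \<Phi> f l1"
proof -
  have "(\<integral>\<^sup>+ x. ennreal (\<Phi> (\<bar>f x\<bar> / l2)) \<partial>I01) \<le> (\<integral>\<^sup>+ x. ennreal (l1/l2) * ennreal (\<Phi> (\<bar>f x\<bar> / l1)) \<partial>I01)"
  proof (rule nn_integral_mono)
    fix x
    have "\<Phi> (\<bar>f x\<bar> / l2) = \<Phi> ((l1/l2) * (\<bar>f x\<bar> / l1))" using assms by (simp add: field_simps)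
    also have "\<dots> \<le> (l1/l2) * \<Phi> (\<bar>f x\<bar> / l1)" by (rule subhomogeneous) (use assms in auto)
    finally show "ennreal (\<Phi> (\<bar>f x\<bar> / l2)) \<le> ennreal (l1/l2) * ennreal (\<Phi> (\<bar>f x\<bar> / l1))"
      using assms nonneg by (simp add: ennreal_mult[symmetric] ennreal_leI)
  qed
  also have "\<dots> = ennreal (l1/l2) * (\<integral>\<^sup>+ x. ennreal (\<Phi> (\<bar>f x\<bar> / l1)) \<partial>I01)"
    using f by (intro nn_integral_cmult modular_integrand_measurable)
  finally show ?thesis unfolding orlicz_modular_def .
qed

lemma bdd_below_modular_unit_ball: "bdd_below {l. l > 0 \<and> orlicz_modular \<Phi> f l \<le> 1}"
  by (rule bdd_belowI[of _ 0]) auto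

lemma lux_norm_le:
  assumes "\<And>l. l > L \<Longrightarrow> orlicz_modular \<Phi> f l \<le> 1" "0 \<le> L"
  shows "lux_norm \<Phi> f \<le> L"
  unfolding lux_norm_def
proof (rule dense_ge)
  fix y assume "L < y"
  then show "Inf {l. l > 0 \<and> orlicz_modular \<Phi> f l \<le> 1} \<le> y"
    using assms by (intro cInf_lower bdd_below_modular_unit_ball) auto
qed

lemma lux_norm_ge:
  assumes "\<exists>l>0. orlicz_modular \<Phi> f l \<le> 1"
    and "\<And>l. 0 < l \<Longrightarrow> l < L \<Longrightarrow> 1 < orlicz_modular \<Phi> f l"
  shows "L \<le> lux_norm \<Phi> f"
  unfolding lux_norm_def
proof (rule cInf_greatest)
  show "{l. l > 0 \<and> orlicz_modular \<Phi> f l \<le> 1} \<noteq> {}" using assms by auto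
  fix x assume "x \<in> {l. l > 0 \<and> orlicz_modular \<Phi> f l \<le> 1}"
  then show "L \<le> x" using assms(2)[of x] by (auto simp: not_less[symmetric])
qed

lemma modular_gt_1_if_lux_norm_1:
  assumes "lux_norm \<Phi> f = 1" "0 < l" "l < 1"
  shows "1 < orlicz_modular \<Phi> f l"
proof (rule ccontr)
  assume "\<not> 1 < orlicz_modular \<Phi> f l"
  then have "lux_norm \<Phi> f \<le> l"
    unfolding lux_norm_def using assms by (intro cInf_lower bdd_below_modular_unit_ball) (auto simp: not_less)
  then show False using assms by simp
qed

lemma modular_le_1_if_lux_norm_1:
  assumes "lux_norm \<Phi> f = 1" "1 < l" "\<exists>l>0. orlicz_modular \<Phi> f l \<le> 1"
  shows "orlicz_modular \<Phi> f l \<le> 1"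
proof -
  have "Inf {l. l > 0 \<and> orlicz_modular \<Phi> f l \<le> 1} < l" using assms unfolding lux_norm_def by simp
  then obtain l' where l': "l' > 0" "orlicz_modular \<Phi> f l' \<le> 1" "l' < l"
    using assms(3) bdd_below_modular_unit_ball by (subst (asm) cInf_less_iff) auto
  then have "orlicz_modular \<Phi> f l \<le> orlicz_modular \<Phi> f l'" by (intro modular_antimono) auto
  then show ?thesis using l' by auto
qed

lemma modular_cmult:
  assumes "c \<noteq> 0" "0 < l"
  shows "orlicz_modular \<Phi> (\<lambda>x. c * f x) l = orlicz_modular \<Phi> f (l / \<bar>c\<bar>)"
  unfolding orlicz_modular_def using assms by (simp add: abs_mult field_simps)

lemma modular_zero: "orlicz_modular \<Phi> (\<lambda>x. 0) l = 0"
  unfolding orlicz_modular_def by (simp add: zero)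

lemma modular_sum_disjoint:
  fixes g :: "nat \<Rightarrow> real \<Rightarrow> real"
  assumes "AE x in I01. \<forall>k<m. \<forall>k'<m. k \<noteq> k' \<longrightarrow> g k x = 0 \<or> g k' x = 0"
    and "\<And>k. g k \<in> borel_measurable I01"
  shows "orlicz_modular \<Phi> (\<lambda>x. \<Sum>k<m. g k x) l = (\<Sum>k<m. orlicz_modular \<Phi> (g k) l)"
proof -
  have "orlicz_modular \<Phi> (\<lambda>x. \<Sum>k<m. g k x) l = (\<integral>\<^sup>+ x. (\<Sum>k<m. ennreal (\<Phi> (\<bar>g k x\<bar> / l))) \<partial>I01)"
    unfolding orlicz_modular_def
    by (rule nn_integral_cong_AE, use assms(1) in eventually_elim)
      (rule sum_disjoint_support[where F="\<lambda>y. ennreal (\<Phi> (\<bar>y\<bar> / l))"], auto simp: zero)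
  also have "\<dots> = (\<Sum>k<m. orlicz_modular \<Phi> (g k) l)"
    unfolding orlicz_modular_def using assms(2) by (intro nn_integral_sum modular_integrand_measurable)
  finally show ?thesis .
qed

lemma modular_indicator:
  assumes "A \<in> sets I01" "0 \<le> h" "0 < l"
  shows "orlicz_modular \<Phi> (\<lambda>x. h * indicator A x) l = ennreal (\<Phi> (h / l)) * emeasure I01 A"
proof -
  have "orlicz_modular \<Phi> (\<lambda>x. h * indicator A x) l = (\<integral>\<^sup>+ x. ennreal (\<Phi> (h / l)) * indicator A x \<partial>I01)"
    unfolding orlicz_modular_def
    by (rule nn_integral_cong) (use assms zero in \<open>auto simp: indicator_def\<close>)
  also have "\<dots> = ennreal (\<Phi> (h / l)) * emeasure I01 A"
    using assms by (simp add: nn_integral_cmult_indicator)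
  finally show ?thesis .
qed

end

context starshaped_orlicz
begin

lemma modular_sum_disj_normalized:
  assumes "disj_normalized \<Phi> g"
  shows "orlicz_modular \<Phi> (\<lambda>t. \<Sum>k<m. c k * g k t) l = (\<Sum>k<m. orlicz_modular \<Phi> (\<lambda>t. c k * g k t) l)"
proof (rule modular_sum_disjoint)
  show "AE x in I01. \<forall>k<m. \<forall>k'<m. k \<noteq> k' \<longrightarrow> c k * g k x = 0 \<or> c k' * g k' x = 0"
    using disj_normalizedD(4)[OF assms] by (rule eventually_mono) auto
qed (use disj_normalizedD(1)[OF assms] in measurable)

lemma modular_term_le:
  assumes "disj_normalized \<Phi> g" "0 < S" "\<bar>c\<bar> \<le> S" "S < l"
  shows "orlicz_modular \<Phi> (\<lambda>t. c * g k t) l \<le> ennreal (\<bar>c\<bar> / S)"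
proof (cases "c = 0")
  case True
  then show ?thesis by (simp add: modular_zero)
next
  case False
  note g = disj_normalizedD(1-3)[OF assms(1), of k]
  have l': "1 < l / S" using assms by simp
  have "orlicz_modular \<Phi> (\<lambda>t. c * g k t) l = orlicz_modular \<Phi> (g k) (l / \<bar>c\<bar>)"
    using False assms by (intro modular_cmult) auto
  also have "\<dots> \<le> ennreal ((l/S) / (l/\<bar>c\<bar>)) * orlicz_modular \<Phi> (g k) (l/S)"
    using l' g assms False by (intro modular_le_scaled divide_left_mono) auto
  also have "\<dots> \<le> ennreal ((l/S) / (l/\<bar>c\<bar>)) * 1"
    using modular_le_1_if_lux_norm_1[OF g(2) l' g(3)] by (intro mult_left_mono) auto
  also have "(l/S) / (l/\<bar>c\<bar>) = \<bar>c\<bar> / S" using assms False by (simp add: field_simps)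
  finally show ?thesis by simp
qed

lemma modular_combination_le_1:
  assumes "disj_normalized \<Phi> g" "(\<Sum>k<m. \<bar>c k\<bar>) < l"
  shows "orlicz_modular \<Phi> (\<lambda>t. \<Sum>k<m. c k * g k t) l \<le> 1"
proof -
  define S where "S = (\<Sum>k<m. \<bar>c k\<bar>)"
  show ?thesis
  proof (cases "S = 0")
    case True
    then have "\<forall>k<m. c k = 0" unfolding S_def by (subst (asm) sum_nonneg_eq_0_iff) auto
    then show ?thesis using modular_sum_disj_normalized[OF assms(1)] by (simp add: modular_zero)
  next
    case False
    then have S: "0 < S" unfolding S_def by (simp add: order_le_neq_trans sum_nonneg)
    have "orlicz_modular \<Phi> (\<lambda>t. \<Sum>k<m. c k * g k t) l \<le> (\<Sum>k<m. ennreal (\<bar>c k\<bar> / S))"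
      unfolding modular_sum_disj_normalized[OF assms(1)]
    proof (rule sum_mono)
      fix k assume "k \<in> {..<m}"
      then have "\<bar>c k\<bar> \<le> S" unfolding S_def by (intro member_le_sum) auto
      then show "orlicz_modular \<Phi> (\<lambda>t. c k * g k t) l \<le> ennreal (\<bar>c k\<bar> / S)"
        using modular_term_le[OF assms(1) S] assms(2) S_def by auto
    qed
    also have "\<dots> = ennreal (\<Sum>k<m. \<bar>c k\<bar> / S)" by (rule sum_ennreal) (use S in auto)
    also have "(\<Sum>k<m. \<bar>c k\<bar> / S) = 1" using S unfolding S_def by (simp add: sum_divide_distrib[symmetric])
    finally show ?thesis by simp
  qed
qed

lemma lux_norm_combination_le:
  assumes "disj_normalized \<Phi> g"
  shows "lux_norm \<Phi> (\<lambda>t. \<Sum>k<m. c k * g k t) \<le> (\<Sum>k<m. \<bar>c k\<bar>)"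
  by (rule lux_norm_le) (use modular_combination_le_1[OF assms] in \<open>auto intro: sum_nonneg\<close>)

lemma modular_term_ge:
  assumes "disj_normalized \<Phi> g" "0 < l" "c \<noteq> 0" "l / 2^k \<le> \<bar>c\<bar>"
    and low: "ennreal (\<kappa> / 2^k) \<le> orlicz_modular \<Phi> (g k) (2^k)"
  shows "ennreal (\<kappa> * \<bar>c\<bar> / l) \<le> orlicz_modular \<Phi> (\<lambda>t. c * g k t) l"
proof -
  define r where "r = (l / \<bar>c\<bar>) / 2^k"
  have r: "0 < r" "r \<le> 1" using assms(2-4) by (auto simp: r_def field_simps)
  define B where "B = orlicz_modular \<Phi> (g k) (l / \<bar>c\<bar>)"
  have "ennreal (\<kappa> / 2^k) \<le> ennreal r * B"
    using low modular_le_scaled[OF _ _ disj_normalizedD(1)[OF assms(1)], of "l / \<bar>c\<bar>" "2^k" k] r assms(2,3)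
    by (auto simp: B_def r_def field_simps)
  then have "ennreal (1 / r) * ennreal (\<kappa> / 2^k) \<le> ennreal (1 / r) * (ennreal r * B)"
    by (rule mult_left_mono) simp
  also have "\<dots> = B" using r by (simp add: mult.assoc[symmetric] ennreal_mult[symmetric])
  finally have "ennreal (1 / r) * ennreal (\<kappa> / 2^k) \<le> orlicz_modular \<Phi> (g k) (l / \<bar>c\<bar>)"
    unfolding B_def .
  moreover have "ennreal (1 / r) * ennreal (\<kappa> / 2^k) = ennreal (\<kappa> * \<bar>c\<bar> / l)"
  proof -
    have "\<kappa> * \<bar>c\<bar> / l = (1 / r) * (\<kappa> / 2^k)" using assms(2,3) by (simp add: r_def field_simps)
    then show ?thesis using r ennreal_mult'[of "1 / r" "\<kappa> / 2^k"] by simp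
  qed
  ultimately show ?thesis using assms(2,3) by (simp add: modular_cmult)
qed

end

lemma sum_inverse_two_power_le: "(\<Sum>k<m. 1 / (2::real)^k) \<le> 2"
proof -
  have "(\<Sum>k<m. 1 / (2::real)^k) = 2 - 2 / 2^m"
    by (induct m) (auto simp: field_simps)
  then show ?thesis by simp
qed

lemma sum_abs_below_geometric_le:
  assumes "0 \<le> l"
  shows "(\<Sum>k\<in>{k\<in>{..<m}. \<bar>c k\<bar> < l / 2^k}. \<bar>c k\<bar>) \<le> 2 * (l::real)"
proof -
  have "(\<Sum>k\<in>{k\<in>{..<m}. \<bar>c k\<bar> < l / 2^k}. \<bar>c k\<bar>) \<le> (\<Sum>k\<in>{k\<in>{..<m}. \<bar>c k\<bar> < l / 2^k}. l / 2^k)"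
    by (rule sum_mono) auto
  also have "\<dots> \<le> (\<Sum>k<m. l / 2^k)" using assms by (intro sum_mono2) auto
  also have "\<dots> = l * (\<Sum>k<m. 1 / 2^k)" by (simp add: sum_distrib_left)
  also have "\<dots> \<le> l * 2" using sum_inverse_two_power_le assms by (intro mult_left_mono) auto
  finally show ?thesis by simp
qed

context starshaped_orlicz
begin

text \<open>The terms with \<open>\<bar>c k\<bar> < l / 2^k\<close> carry total weight at most \<open>2 l\<close>; each of the others
  contributes at least \<open>\<kappa> \<bar>c k\<bar> / l\<close> to the modular.\<close>
lemma lux_norm_combination_ge:
  assumes g: "disj_normalized \<Phi> g" and "0 < \<kappa>"
    and low: "\<And>k. ennreal (\<kappa> / 2^k) \<le> orlicz_modular \<Phi> (g k) (2^k)"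
  shows "\<kappa> / (1 + 2*\<kappa>) * (\<Sum>k<m. \<bar>c k\<bar>) \<le> lux_norm \<Phi> (\<lambda>t. \<Sum>k<m. c k * g k t)"
proof (rule lux_norm_ge)
  define S where "S = (\<Sum>k<m. \<bar>c k\<bar>)"
  show "\<exists>l>0. orlicz_modular \<Phi> (\<lambda>t. \<Sum>k<m. c k * g k t) l \<le> 1"
    using modular_combination_le_1[OF g, where m=m and c=c and l="S + 1"] sum_nonneg[of "{..<m}" "\<lambda>k. \<bar>c k\<bar>"]
    by (intro exI[of _ "S + 1"]) (auto simp: S_def add_nonneg_pos)
  fix l assume l: "0 < l" "l < \<kappa> / (1 + 2*\<kappa>) * (\<Sum>k<m. \<bar>c k\<bar>)"
  define G where "G = {k\<in>{..<m}. l / 2^k \<le> \<bar>c k\<bar>}"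
  have "(\<Sum>k\<in>G. ennreal (\<kappa> * \<bar>c k\<bar> / l)) \<le> (\<Sum>k\<in>G. orlicz_modular \<Phi> (\<lambda>t. c k * g k t) l)"
  proof (rule sum_mono)
    fix k assume "k \<in> G"
    then show "ennreal (\<kappa> * \<bar>c k\<bar> / l) \<le> orlicz_modular \<Phi> (\<lambda>t. c k * g k t) l"
      using modular_term_ge[OF g l(1) _ _ low] by (cases "c k = 0") (auto simp: G_def)
  qed
  also have "\<dots> \<le> (\<Sum>k<m. orlicz_modular \<Phi> (\<lambda>t. c k * g k t) l)"
    by (rule sum_mono2) (auto simp: G_def)
  also have "\<dots> = orlicz_modular \<Phi> (\<lambda>t. \<Sum>k<m. c k * g k t) l"
    by (rule modular_sum_disj_normalized[OF g, symmetric])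
  finally have A: "ennreal (\<Sum>k\<in>G. \<kappa> * \<bar>c k\<bar> / l) \<le> orlicz_modular \<Phi> (\<lambda>t. \<Sum>k<m. c k * g k t) l"
    using assms l by (subst sum_ennreal[symmetric]) auto
  have "{..<m} - G = {k\<in>{..<m}. \<bar>c k\<bar> < l / 2^k}" by (auto simp: G_def)
  then have "(\<Sum>k\<in>{..<m}-G. \<bar>c k\<bar>) \<le> 2 * l" using sum_abs_below_geometric_le[where l=l and m=m and c=c] l by simp
  moreover have "S = (\<Sum>k\<in>G. \<bar>c k\<bar>) + (\<Sum>k\<in>{..<m}-G. \<bar>c k\<bar>)"
    unfolding S_def by (subst sum.subset_diff[of G]) (auto simp: G_def)
  ultimately have SG: "S - 2 * l \<le> (\<Sum>k\<in>G. \<bar>c k\<bar>)" by linarith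
  have "l * (1 + 2*\<kappa>) < \<kappa> * S" using l assms(2) unfolding S_def by (simp add: field_simps)
  then have "1 < \<kappa> * (S - 2*l) / l" using l assms(2) by (simp add: field_simps)
  also have "\<kappa> * (S - 2*l) / l \<le> \<kappa> * (\<Sum>k\<in>G. \<bar>c k\<bar>) / l"
    using SG l assms(2) by (intro divide_right_mono mult_left_mono) auto
  also have "\<dots> = (\<Sum>k\<in>G. \<kappa> * \<bar>c k\<bar> / l)" by (simp add: sum_distrib_left sum_divide_distrib)
  finally have "1 < ennreal (\<Sum>k\<in>G. \<kappa> * \<bar>c k\<bar> / l)"
    by (metis ennreal_1 ennreal_less_iff zero_le_one)
  with A show "1 < orlicz_modular \<Phi> (\<lambda>t. \<Sum>k<m. c k * g k t) l" by order
qed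

lemma l1_equiv_if_modular_ge:
  assumes g: "disj_normalized \<Phi> g" and "0 < \<kappa>"
    and low: "\<And>k. ennreal (\<kappa> / 2^k) \<le> orlicz_modular \<Phi> (g k) (2^k)"
  shows "l1_equiv \<Phi> g ((1 + 2*\<kappa>) / \<kappa>)"
  unfolding l1_equiv_def
proof (intro allI conjI)
  fix m and c :: "nat \<Rightarrow> real"
  have S: "0 \<le> (\<Sum>k<m. \<bar>c k\<bar>)" by (auto intro: sum_nonneg)
  show "1 / ((1 + 2*\<kappa>) / \<kappa>) * (\<Sum>k<m. \<bar>c k\<bar>) \<le> lux_norm \<Phi> (\<lambda>t. \<Sum>k<m. c k * g k t)"
    using lux_norm_combination_ge[OF assms] by simp
  have "lux_norm \<Phi> (\<lambda>t. \<Sum>k<m. c k * g k t) \<le> (\<Sum>k<m. \<bar>c k\<bar>)"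
    by (rule lux_norm_combination_le[OF g])
  also have "\<dots> \<le> (1 + 2*\<kappa>) / \<kappa> * (\<Sum>k<m. \<bar>c k\<bar>)"
    using mult_right_mono[OF _ S, of 1 "(1 + 2*\<kappa>) / \<kappa>"] assms(2) by (simp add: field_simps)
  finally show "lux_norm \<Phi> (\<lambda>t. \<Sum>k<m. c k * g k t) \<le> (1 + 2*\<kappa>) / \<kappa> * (\<Sum>k<m. \<bar>c k\<bar>)" .
qed

end

definition window :: "nat set \<Rightarrow> real \<Rightarrow> real \<Rightarrow> nat set" where
  "window E t s = {e\<in>E. t * s / 4 \<le> 2^e \<and> (2::real)^e < s}"

lemma finite_window: "finite (window E t s)"
  by (rule finite_subset[OF _ finite_breakpoints[of E s]]) (auto simp: window_def breakpoints_def)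

text \<open>Between \<open>t y / 2\<close> and \<open>2 y\<close> the slope grows by the factor \<open>2^card (window E t (2 * y))\<close>.\<close>
lemma doubling_orlicz_window_ratio:
  assumes y: "0 \<le> y" and t: "0 < t" "t \<le> 1" and W: "card (window E t (2*y)) \<le> G"
  shows "t / 4 / 2^G * doubling_orlicz E (2*y) \<le> doubling_orlicz E (t*y)"
proof -
  define x where "x = t*y/2"
  define W where "W = card (window E t (2*y))"
  have x: "0 \<le> x" "x \<le> t*y" "x \<le> 2*y" using t y mult_right_mono[of t 1 y] by (auto simp: x_def)
  have N: "card (breakpoints E (2*y)) = card (breakpoints E x) + W"
    unfolding W_def window_def x_def using card_breakpoints_split[of x "2*y" E] x by (simp add: x_def)
  have "(2::real)^W / 2^G \<le> 1" using W unfolding W_def by (simp add: power_increasing)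
  have "t / 4 / 2^G * doubling_orlicz E (2*y) \<le> t / 4 / 2^G * (2*y * 2^(card (breakpoints E (2*y))))"
    using doubling_orlicz_le[of "2*y" E] y t by (intro mult_left_mono) auto
  also have "\<dots> = x * 2^(card (breakpoints E x)) * (2^W / 2^G)" unfolding N x_def by (simp add: power_add)
  also have "\<dots> \<le> x * 2^(card (breakpoints E x))"
    using \<open>(2::real)^W / 2^G \<le> 1\<close> x by (intro mult_left_le) auto
  also have "\<dots> = (t*y - x) * 2^(card (breakpoints E x))" unfolding x_def by simp
  also have "\<dots> \<le> doubling_orlicz E (t*y)" by (rule doubling_orlicz_ge_breakpoints) (use x in auto)
  finally show ?thesis .
qed

definition cluster_size :: "nat \<Rightarrow> nat" where
  "cluster_size j = fst (prod_decode j) + 1"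

definition cluster_start :: "nat \<Rightarrow> nat" where
  "cluster_start j = 4^(j+1)"

definition cluster :: "nat \<Rightarrow> nat set" where
  "cluster j = (\<lambda>i. cluster_start j + cluster_size j * i) ` {1..cluster_size j}"

definition cluster_exponents :: "nat set" where
  "cluster_exponents = (\<Union>j. cluster j)"

lemma cluster_size_le: "cluster_size j \<le> j + 1"
  using le_prod_encode_1[of "fst (prod_decode j)" "snd (prod_decode j)"]
  by (simp add: cluster_size_def)

lemma cluster_size_pos: "1 \<le> cluster_size j"
  by (simp add: cluster_size_def)

lemma cluster_size_prod_encode: "cluster_size (prod_encode (q, n)) = q + 1"
  by (simp add: cluster_size_def)

lemma strict_mono_prod_encode_snd: "strict_mono (\<lambda>n. prod_encode (q, n))"
  by (rule strict_monoI_Suc) (simp add: prod_encode_def triangle_def)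

lemma cluster_bounds: "e \<in> cluster j \<Longrightarrow> cluster_start j < e \<and> e \<le> cluster_start j + cluster_size j * cluster_size j"
  unfolding cluster_def using cluster_size_pos[of j] by auto

lemma card_cluster: "card (cluster j) = cluster_size j"
proof -
  have "inj_on (\<lambda>i. cluster_start j + cluster_size j * i) {1..cluster_size j}"
    using cluster_size_pos[of j] by (intro inj_onI) auto
  then show ?thesis unfolding cluster_def by (simp add: card_image)
qed

lemma strict_mono_cluster_start: "strict_mono cluster_start"
  unfolding cluster_start_def by (rule strict_monoI_Suc) simp

lemma less_cluster_start: "j < cluster_start j"
proof -
  have "j < 2^j" by (rule less_exp)
  also have "(2::nat)^j \<le> 4^(j+1)" by (rule order_trans[OF power_mono[of 2 4]]) auto
  finally show ?thesis unfolding cluster_start_def .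
qed

lemma square_plus_le_four_power: "n*n + n + 1 \<le> 3 * 4^n"
proof (induct n)
  case (Suc n)
  have "Suc n * Suc n + Suc n + 1 \<le> 3 * (n*n + n + 1)" by simp
  also have "\<dots> \<le> 3 * 4^Suc n" using Suc by simp
  finally show ?case .
qed simp

lemma cluster_gap:
  assumes "e \<in> cluster i" "i < j"
  shows "e + j + 1 \<le> cluster_start j"
proof -
  from assms(2) have "Suc i \<le> j" by simp
  then show ?thesis
  proof (induct j rule: dec_induct)
  case base
  have "e \<le> cluster_start i + (i+1)*(i+1)"
    using cluster_bounds[OF assms(1)] cluster_size_le[of i] mult_le_mono[of "cluster_size i" "i+1"] by fastforce
  then have "e + (i+1) + 1 \<le> 4^(i+1) + ((i+1)*(i+1) + (i+1) + 1)" unfolding cluster_start_def by simp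
  also have "\<dots> \<le> 4^(i+1) + 3 * 4^(i+1)" using square_plus_le_four_power[of "i+1"] by simp
  finally show ?case by (simp add: cluster_start_def)
next
  case (step n)
  then show ?case using strict_monoD[OF strict_mono_cluster_start, of n "Suc n"] by simp
qed
qed

lemma cluster_range_exists:
  assumes "(2::real)^(cluster_start 0) \<le> s"
  shows "\<exists>j. (2::real)^(cluster_start j) \<le> s \<and> s < 2^(cluster_start (j+1))"
proof -
  obtain n where n: "s < (2::real)^n" using real_arch_pow[of 2 s] by auto
  have "(2::real)^n \<le> 2^(cluster_start (n+1))" using less_cluster_start[of "n+1"] by (intro power_increasing) auto
  then have "s < (2::real)^(cluster_start (n+1))" using n by linarith
  then have ex: "\<exists>j. s < (2::real)^(cluster_start (j+1))" by blast
  define j where "j = (LEAST j. s < (2::real)^(cluster_start (j+1)))"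
  have "s < 2^(cluster_start (j+1))" unfolding j_def by (rule LeastI_ex[OF ex])
  moreover have "(2::real)^(cluster_start j) \<le> s"
  proof (cases j)
    case (Suc i)
    then have "i < j" by simp
    then have "\<not> s < (2::real)^(cluster_start (i+1))" unfolding j_def by (rule not_less_Least)
    then show ?thesis using Suc by simp
  qed (use assms in simp)
  ultimately show ?thesis by auto
qed

text \<open>A window sitting above cluster \<open>J\<close>, with \<open>4 / t \<le> 2^J\<close>, is too narrow to reach back into
  an earlier cluster.\<close>
lemma window_subset_cluster:
  assumes t: "0 < t" and J: "4 / t \<le> (2::real)^J" and sJ: "(2::real)^(cluster_start J) \<le> s"
    and j: "(2::real)^(cluster_start j) \<le> s" "s < 2^(cluster_start (j+1))"
  shows "window cluster_exponents t s \<subseteq> cluster j"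
proof
  fix e assume "e \<in> window cluster_exponents t s"
  then obtain i where i: "e \<in> cluster i" and lo: "t * s / 4 \<le> 2^e" and hi: "(2::real)^e < s"
    unfolding window_def cluster_exponents_def by auto
  have "i = j"
  proof (rule linorder_cases[of i j])
    assume "j < i"
    then have "cluster_start (j+1) < e"
      using cluster_bounds[OF i] strict_mono_less_eq[OF strict_mono_cluster_start, of "j+1" i] by simp
    then have "(2::real)^(cluster_start (j+1)) \<le> 2^e" by (intro power_increasing) auto
    with hi j(2) show ?thesis by linarith
  next
    assume "i < j"
    have "(2::real)^(cluster_start J) < 2^(cluster_start (j+1))" using sJ j(2) by linarith
    then have "cluster_start J < cluster_start (j+1)" by (simp add: power_less_imp_less_exp)
    then have "J \<le> j" using strict_mono_less[OF strict_mono_cluster_start] by simp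
    have "s \<le> (4 / t) * 2^e" using lo t by (simp add: field_simps)
    also have "\<dots> \<le> 2^J * 2^e" using J by (intro mult_right_mono) auto
    finally have "(2::real)^(cluster_start j) \<le> 2^(J+e)" using j(1) by (simp add: power_add)
    then have "cluster_start j \<le> J + e" by (simp add: power_le_imp_le_exp)
    with cluster_gap[OF i \<open>i < j\<close>] \<open>J \<le> j\<close> show ?thesis by simp
  qed
  with i show "e \<in> cluster j" by simp
qed

lemma card_window_le_cluster_size:
  "window cluster_exponents t s \<subseteq> cluster j \<Longrightarrow> card (window cluster_exponents t s) \<le> cluster_size j"
  using card_mono[of "cluster j"] card_cluster[of j] by (simp add: cluster_def)

text \<open>Consecutive points of cluster \<open>j\<close> are \<open>cluster_size j\<close> apart, more than the width of a window.\<close>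
lemma card_window_le_1:
  assumes sub: "window cluster_exponents t s \<subseteq> cluster j" and t: "0 < t"
    and q: "4 / t \<le> (2::real)^(cluster_size j)"
  shows "card (window cluster_exponents t s) \<le> 1"
proof -
  let ?W = "window cluster_exponents t s"
  have False if ab: "a \<in> ?W" "b \<in> ?W" "a < b" for a b
  proof -
    obtain i1 i2 where i: "a = cluster_start j + cluster_size j * i1" "b = cluster_start j + cluster_size j * i2"
      using sub ab(1,2) unfolding cluster_def by blast
    then have "i1 < i2" using ab(3) by simp
    then have "a + cluster_size j \<le> b" using i mult_le_mono2[of "i1 + 1" i2 "cluster_size j"] by simp
    then have "(2::real)^a * 2^(cluster_size j) \<le> 2^b" by (simp add: power_add[symmetric] power_increasing)
    moreover have "t * s / 4 \<le> 2^a" "(2::real)^b < s" using ab unfolding window_def by auto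
    moreover have "s \<le> 2^a * (4/t)" using \<open>t * s / 4 \<le> 2^a\<close> t by (simp add: field_simps)
    moreover have "(2::real)^a * (4/t) \<le> 2^a * 2^(cluster_size j)" using q by (intro mult_left_mono) auto
    ultimately show False by linarith
  qed
  then have "\<forall>a\<in>?W. \<forall>b\<in>?W. a = b" by (meson linorder_neqE_nat)
  then show ?thesis using card_le_Suc0_iff_eq[OF finite_window] by simp
qed

lemma measure_support_tendsto_0:
  fixes f :: "nat \<Rightarrow> real \<Rightarrow> real"
  assumes meas: "\<And>n. f n \<in> borel_measurable I01"
    and ae: "AE x in I01. \<forall>n m. n \<noteq> m \<longrightarrow> f n x = 0 \<or> f m x = 0"
  shows "(\<lambda>n. measure I01 {x\<in>space I01. f n x \<noteq> 0}) \<longlonglongrightarrow> 0"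
proof -
  define A where "A n = {x\<in>space I01. f n x \<noteq> 0}" for n
  define F where "F y = (if y = 0 then 0 else 1 :: ennreal)" for y :: real
  have A: "A n \<in> sets I01" for n unfolding A_def using meas[of n] by measurable
  have "(\<Sum>n<K. emeasure I01 (A n)) \<le> 1" for K
  proof -
    have "(\<Sum>n<K. emeasure I01 (A n)) = (\<integral>\<^sup>+ x. (\<Sum>n<K. indicator (A n) x) \<partial>I01)"
      using A by (simp add: nn_integral_sum)
    also have "\<dots> \<le> (\<integral>\<^sup>+ x. 1 \<partial>I01)"
    proof (rule nn_integral_mono_AE)
      show "AE x in I01. (\<Sum>n<K. indicator (A n) x) \<le> (1::ennreal)"
        using ae
      proof eventually_elim
        case (elim x)
        show ?case
        proof (cases "x \<in> space I01")
          case True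
          then have "(\<Sum>n<K. indicator (A n) x) = (\<Sum>n<K. F (f n x))"
            by (intro sum.cong) (auto simp: A_def F_def)
          also have "\<dots> = F (\<Sum>n<K. f n x)"
            by (rule sum_disjoint_support[symmetric]) (use elim in \<open>auto simp: F_def\<close>)
          finally show ?thesis by (simp add: F_def)
        qed (auto simp: A_def indicator_def)
      qed
    qed
    also have "\<dots> = 1" by (simp add: emeasure_restrict_space)
    finally show ?thesis .
  qed
  then have "(\<Sum>n<K. measure I01 (A n)) \<le> 1" for K
    using finite_measure.emeasure_eq_measure[OF finite_measure_lebesgue_on[of "{0..1::real}"]]
    by (simp add: sum_ennreal ennreal_le_1)
  then have "summable (\<lambda>n. measure I01 (A n))" by (intro summableI_nonneg_bounded) auto
  then show ?thesis unfolding A_def by (rule summable_LIMSEQ_zero)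
qed

context starshaped_orlicz
begin

text \<open>The part of the modular at scale \<open>1/2\<close> coming from points where \<open>2 \<bar>f\<bar>\<close> takes values in \<open>A\<close>.\<close>
definition value_modular :: "(real \<Rightarrow> real) \<Rightarrow> real set \<Rightarrow> ennreal" where
  "value_modular f A = (\<integral>\<^sup>+ x. ennreal (\<Phi> (2*\<bar>f x\<bar>)) * indicator A (2*\<bar>f x\<bar>) \<partial>I01)"

lemma value_modular_integrand_measurable:
  assumes "f \<in> borel_measurable I01" "A \<in> sets borel"
  shows "(\<lambda>x. ennreal (\<Phi> (2*\<bar>f x\<bar>)) * indicator A (2*\<bar>f x\<bar>)) \<in> borel_measurable I01"
proof -
  have "(\<lambda>x. 2*\<bar>f x\<bar>) \<in> borel_measurable I01" using assms(1) by measurable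
  from measurable_compose[OF this borel_measurable_indicator[OF assms(2)]]
  have "(\<lambda>x. indicator A (2*\<bar>f x\<bar>) :: ennreal) \<in> borel_measurable I01" by (simp add: o_def)
  moreover have "(\<lambda>x. ennreal (\<Phi> (2*\<bar>f x\<bar>))) \<in> borel_measurable I01"
    using modular_integrand_measurable[OF assms(1), of "1/2"] by (simp add: mult.commute)
  ultimately show ?thesis by (rule borel_measurable_times_ennreal[rotated])
qed

lemma value_modular_UNIV: "value_modular f UNIV = orlicz_modular \<Phi> f (1/2)"
  unfolding value_modular_def orlicz_modular_def by (simp add: mult.commute)

lemma value_modular_mono: "A \<subseteq> B \<Longrightarrow> value_modular f A \<le> value_modular f B"
  unfolding value_modular_def by (rule nn_integral_mono) (auto simp: indicator_def)

lemma value_modular_subadditive: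
  assumes "f \<in> borel_measurable I01" "B \<in> sets borel" "C \<in> sets borel" "A \<subseteq> B \<union> C"
  shows "value_modular f A \<le> value_modular f B + value_modular f C"
proof -
  have "value_modular f A \<le> (\<integral>\<^sup>+ x. ennreal (\<Phi> (2*\<bar>f x\<bar>)) * indicator B (2*\<bar>f x\<bar>)
      + ennreal (\<Phi> (2*\<bar>f x\<bar>)) * indicator C (2*\<bar>f x\<bar>) \<partial>I01)"
    unfolding value_modular_def by (rule nn_integral_mono) (use assms(4) in \<open>auto simp: indicator_def\<close>)
  also have "\<dots> = value_modular f B + value_modular f C"
    unfolding value_modular_def by (rule nn_integral_add) (use value_modular_integrand_measurable assms in auto)
  finally show ?thesis .
qed

text \<open>Disjoint supports have measures tending to \<open>0\<close>, so small values of \<open>f n\<close> eventually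
  contribute little.\<close>
lemma value_modular_below_eventually_le:
  assumes "disj_normalized \<Phi> f" "0 < \<epsilon>"
  shows "eventually (\<lambda>n. value_modular (f n) {..<S} \<le> ennreal \<epsilon>) sequentially"
proof -
  define A where "A n = {x\<in>space I01. f n x \<noteq> 0}" for n
  have A: "A n \<in> sets I01" for n unfolding A_def using disj_normalizedD(1)[OF assms(1)] by measurable
  define M where "M = max 0 (\<Phi> S)"
  have lim: "(\<lambda>n. measure I01 (A n)) \<longlonglongrightarrow> 0"
    unfolding A_def using disj_normalizedD[OF assms(1)] by (intro measure_support_tendsto_0)
  have "0 < \<epsilon> / (M + 1)" using assms(2) by (simp add: M_def)
  from order_tendstoD(2)[OF lim this]
  show ?thesis
  proof eventually_elim
    case (elim n)
    have "value_modular (f n) {..<S} \<le> (\<integral>\<^sup>+ x. ennreal M * indicator (A n) x \<partial>I01)"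
      unfolding value_modular_def
    proof (rule nn_integral_mono)
      fix x assume "x \<in> space I01"
      then show "ennreal (\<Phi> (2*\<bar>f n x\<bar>)) * indicator {..<S} (2*\<bar>f n x\<bar>) \<le> ennreal M * indicator (A n) x"
      proof (cases "2*\<bar>f n x\<bar> < S \<and> f n x \<noteq> 0")
        case True
        then have "\<Phi> (2*\<bar>f n x\<bar>) \<le> M" using monoD[OF mono, of "2*\<bar>f n x\<bar>" S] by (simp add: M_def)
        with True \<open>x \<in> space I01\<close> show ?thesis by (simp add: A_def ennreal_leI)
      next
        case False
        then show ?thesis by (cases "f n x = 0") (simp_all add: zero indicator_def)
      qed
    qed
    also have "\<dots> = ennreal M * emeasure I01 (A n)" using A by (rule nn_integral_cmult_indicator)
    also have "\<dots> = ennreal (M * measure I01 (A n))"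
      using finite_measure.emeasure_eq_measure[OF finite_measure_lebesgue_on[of "{0..1::real}"]]
      by (simp add: ennreal_mult M_def)
    also have "\<dots> \<le> ennreal \<epsilon>"
    proof (rule ennreal_leI)
      have "M * measure I01 (A n) \<le> (M + 1) * (\<epsilon> / (M + 1))"
        using elim by (intro mult_mono) (auto simp: M_def)
      then show "M * measure I01 (A n) \<le> \<epsilon>" by (simp add: M_def)
    qed
    finally show ?case .
  qed
qed

end

interpretation doubling: starshaped_orlicz "doubling_orlicz E" for E
  by unfold_locales (auto simp: doubling_orlicz_mono doubling_orlicz_subhomogeneous)

lemma modular_ge_window_mass:
  assumes f: "f \<in> borel_measurable I01" and A: "A \<in> sets borel"
    and W: "\<And>s. s \<in> A \<Longrightarrow> card (window E (1/2^k) s) \<le> G"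
  shows "ennreal (1 / 2^k / 4 / 2^G) * doubling.value_modular E f A \<le> orlicz_modular (doubling_orlicz E) f (2^k)"
proof -
  define c :: real where "c = 1 / 2^k / 4 / 2^G"
  have "ennreal c * doubling.value_modular E f A
      = (\<integral>\<^sup>+ x. ennreal c * (ennreal (doubling_orlicz E (2*\<bar>f x\<bar>)) * indicator A (2*\<bar>f x\<bar>)) \<partial>I01)"
    unfolding doubling.value_modular_def
    by (rule nn_integral_cmult[symmetric]) (rule doubling.value_modular_integrand_measurable[OF f A])
  also have "\<dots> \<le> (\<integral>\<^sup>+ x. ennreal (doubling_orlicz E (\<bar>f x\<bar> / 2^k)) \<partial>I01)"
  proof (rule nn_integral_mono)
    fix x
    show "ennreal c * (ennreal (doubling_orlicz E (2*\<bar>f x\<bar>)) * indicator A (2*\<bar>f x\<bar>))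
        \<le> ennreal (doubling_orlicz E (\<bar>f x\<bar> / 2^k))"
    proof (cases "2*\<bar>f x\<bar> \<in> A")
      case True
      have "c * doubling_orlicz E (2*\<bar>f x\<bar>) \<le> doubling_orlicz E (1/2^k * \<bar>f x\<bar>)"
        unfolding c_def by (rule doubling_orlicz_window_ratio) (use W[OF True] in auto)
      then show ?thesis
        using True doubling_orlicz_nonneg[of "2*\<bar>f x\<bar>" E]
        by (simp add: c_def ennreal_mult[symmetric] ennreal_leI)
    qed simp
  qed
  finally show ?thesis unfolding orlicz_modular_def c_def .
qed

abbreviation Phi0 :: "real \<Rightarrow> real" where
  "Phi0 \<equiv> doubling_orlicz cluster_exponents"

definition cluster_range :: "nat \<Rightarrow> real set" where
  "cluster_range j = {2^(cluster_start j) ..< 2^(cluster_start (j+1))}"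

definition small_range :: "nat \<Rightarrow> real set" where
  "small_range Q = (\<Union>j\<in>{j. cluster_size j \<le> Q}. cluster_range j)"

definition large_range :: "nat \<Rightarrow> real set" where
  "large_range Q = (\<Union>j\<in>{j. Q < cluster_size j}. cluster_range j)"

lemma small_range_borel: "small_range Q \<in> sets borel"
  unfolding small_range_def cluster_range_def by (intro sets.countable_UN') auto

lemma large_range_borel: "large_range Q \<in> sets borel"
  unfolding large_range_def cluster_range_def by (intro sets.countable_UN') auto

lemma ranges_cover:
  assumes "(2::real)^(cluster_start 0) \<le> S"
  shows "{S..} \<subseteq> small_range Q \<union> large_range Q"
proof
  fix s assume "s \<in> {S..}"
  with assms obtain j where "s \<in> cluster_range j"
    using cluster_range_exists[of s] by (auto simp: cluster_range_def)
  then show "s \<in> small_range Q \<union> large_range Q"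
    unfolding small_range_def large_range_def by (cases "cluster_size j \<le> Q") auto
qed

lemma card_window_small_range:
  assumes "s \<in> small_range Q" "(2::real)^(cluster_start (k+2)) \<le> s"
  shows "card (window cluster_exponents (1/2^k) s) \<le> Q"
proof -
  obtain j where j: "cluster_size j \<le> Q" "s \<in> cluster_range j" using assms(1) by (auto simp: small_range_def)
  have "window cluster_exponents (1/2^k) s \<subseteq> cluster j"
    by (rule window_subset_cluster[of _ "k+2"]) (use assms j in \<open>auto simp: cluster_range_def\<close>)
  then show ?thesis using card_window_le_cluster_size j(1) by (meson le_trans)
qed

lemma card_window_large_range:
  assumes "k + 2 \<le> Q" "s \<in> large_range Q" "(2::real)^(cluster_start (k+2)) \<le> s"
  shows "card (window cluster_exponents (1/2^k) s) \<le> 1"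
proof -
  obtain j where j: "Q < cluster_size j" "s \<in> cluster_range j" using assms(2) by (auto simp: large_range_def)
  have "(2::real)^(k+2) \<le> 2^(cluster_size j)" using assms(1) j(1) by (intro power_increasing) auto
  moreover have "window cluster_exponents (1/2^k) s \<subseteq> cluster j"
    by (rule window_subset_cluster[of _ "k+2"]) (use assms j in \<open>auto simp: cluster_range_def\<close>)
  ultimately show ?thesis by (intro card_window_le_1) auto
qed

text \<open>If small clusters keep carrying a quarter of the modular, the windows there are at most
  \<open>Q\<close> wide.\<close>
lemma frequent_modular_ge_small_clusters:
  assumes meas: "\<And>n. f n \<in> borel_measurable I01"
    and mass: "\<And>S N. \<exists>n\<ge>N. ennreal (1/4) \<le> doubling.value_modular cluster_exponents (f n) (small_range Q \<inter> {S..})"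
  shows "\<exists>n\<ge>N. ennreal (1 / 2^Q / 16 / 2^k) \<le> orlicz_modular Phi0 (f n) (2^k)"
proof -
  define A where "A = small_range Q \<inter> {2^(cluster_start (k+2))..}"
  obtain n where n: "n \<ge> N" "ennreal (1/4) \<le> doubling.value_modular cluster_exponents (f n) A"
    using mass unfolding A_def by blast
  have "ennreal (1 / 2^Q / 16 / 2^k) = ennreal (1 / 2^k / 4 / 2^Q * (1/4))" by simp
  also have "\<dots> = ennreal (1 / 2^k / 4 / 2^Q) * ennreal (1/4)" by (rule ennreal_mult) auto
  also have "\<dots> \<le> ennreal (1 / 2^k / 4 / 2^Q) * doubling.value_modular cluster_exponents (f n) A"
    using n(2) by (rule mult_left_mono) simp
  also have "\<dots> \<le> orlicz_modular Phi0 (f n) (2^k)"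
    by (rule modular_ge_window_mass[OF meas]) (use small_range_borel card_window_small_range in \<open>auto simp: A_def\<close>)
  finally show ?thesis using n(1) by blast
qed

lemma ennreal_half_le_if_sum_gt_1:
  fixes a h k :: ennreal
  assumes "1 < a + (h + k)" "a \<le> ennreal (1/4)" "h < ennreal (1/4)"
  shows "ennreal (1/2) \<le> k"
proof (rule ccontr)
  assume "\<not> ennreal (1/2) \<le> k"
  then have k: "k < ennreal (1/2)" by simp
  obtain ar where a: "a = ennreal ar" "0 \<le> ar" using assms(2) by (cases a) (auto simp: top_unique)
  obtain hr where h: "h = ennreal hr" "0 \<le> hr" using assms(3) by (cases h) auto
  obtain kr where kr: "k = ennreal kr" "0 \<le> kr" using k by (cases k) auto
  have "ar \<le> 1/4" "hr < 1/4"
    using assms(2,3) a h by (auto simp: ennreal_le_iff ennreal_less_iff)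
  moreover have "ennreal kr < ennreal (1/2)" using k unfolding kr(1) .
  then have "kr < 1/2" using ennreal_less_iff[OF kr(2)] by blast
  moreover have "1 < ennreal (ar + (hr + kr))" using assms(1) a h kr by simp
  then have "1 < ar + (hr + kr)" by (metis ennreal_1 ennreal_less_iff zero_le_one)
  ultimately show False by linarith
qed

lemma value_modular_large_range_ge_half:
  assumes meas: "g \<in> borel_measurable I01" and "lux_norm Phi0 g = 1"
    and S: "(2::real)^(cluster_start 0) \<le> S"
    and low: "doubling.value_modular cluster_exponents g {..<S} \<le> ennreal (1/4)"
    and small: "doubling.value_modular cluster_exponents g (small_range Q \<inter> {S..}) < ennreal (1/4)"
  shows "ennreal (1/2) \<le> doubling.value_modular cluster_exponents g (large_range Q \<inter> {S..})"
proof -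
  let ?vm = "doubling.value_modular cluster_exponents g"
  have "1 < orlicz_modular Phi0 g (1/2)"
    by (rule doubling.modular_gt_1_if_lux_norm_1[OF assms(2)]) auto
  also have "\<dots> = ?vm UNIV" by (simp add: doubling.value_modular_UNIV)
  also have "\<dots> \<le> ?vm {..<S} + ?vm {S..}"
    by (rule doubling.value_modular_subadditive[OF meas]) auto
  also have "?vm {S..} \<le> ?vm (small_range Q \<inter> {S..}) + ?vm (large_range Q \<inter> {S..})"
    by (rule doubling.value_modular_subadditive[OF meas])
      (use small_range_borel large_range_borel ranges_cover[OF S] in auto)
  finally have "1 < ?vm {..<S} + (?vm (small_range Q \<inter> {S..}) + ?vm (large_range Q \<inter> {S..}))"
    by (simp add: add_left_mono order_less_le_trans)
  then show ?thesis using ennreal_half_le_if_sum_gt_1 low small by blast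
qed

text \<open>Otherwise, values far out and in small clusters carry little, so at least half of the modular
  sits on large clusters, where windows hold at most one breakpoint.\<close>
lemma frequent_modular_ge_large_clusters:
  assumes f: "disj_normalized Phi0 f"
    and small: "\<And>n. n \<ge> N1 \<Longrightarrow> doubling.value_modular cluster_exponents (f n) (small_range (k+2) \<inter> {S1..}) < ennreal (1/4)"
  shows "\<exists>n\<ge>N. ennreal (1 / 16 / 2^k) \<le> orlicz_modular Phi0 (f n) (2^k)"
proof -
  let ?vm = "doubling.value_modular cluster_exponents"
  define S where "S = max S1 (2^(cluster_start (k+2)))"
  have S: "(2::real)^(cluster_start 0) \<le> S"
    using strict_mono_less_eq[OF strict_mono_cluster_start, of 0 "k+2"] by (auto simp: S_def le_max_iff_disj)
  obtain N2 where N2: "\<And>n. n \<ge> N2 \<Longrightarrow> ?vm (f n) {..<S} \<le> ennreal (1/4)"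
    using doubling.value_modular_below_eventually_le[OF f, of "1/4" S] by (auto simp: eventually_sequentially)
  define n where "n = max N (max N1 N2)"
  note meas = disj_normalizedD(1)[OF f]
  have "?vm (f n) (small_range (k+2) \<inter> {S..}) \<le> ?vm (f n) (small_range (k+2) \<inter> {S1..})"
    by (rule doubling.value_modular_mono) (auto simp: S_def)
  also have "\<dots> < ennreal (1/4)" using small[of n] by (simp add: n_def)
  finally have half: "ennreal (1/2) \<le> ?vm (f n) (large_range (k+2) \<inter> {S..})"
    using value_modular_large_range_ge_half[OF meas disj_normalizedD(2)[OF f] S] N2[of n]
    by (simp add: n_def)
  have "ennreal (1 / 16 / 2^k) = ennreal (1 / 2^k / 4 / 2^1 * (1/2))" by simp
  also have "\<dots> = ennreal (1 / 2^k / 4 / 2^1) * ennreal (1/2)" by (rule ennreal_mult) auto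
  also have "\<dots> \<le> ennreal (1 / 2^k / 4 / 2^1) * ?vm (f n) (large_range (k+2) \<inter> {S..})"
    using half by (rule mult_left_mono) simp
  also have "\<dots> \<le> orlicz_modular Phi0 (f n) (2^k)"
    by (rule modular_ge_window_mass[OF meas])
      (use large_range_borel card_window_large_range[of k "k+2"] in \<open>auto simp: S_def\<close>)
  finally show ?thesis by (intro exI[of _ n]) (simp add: n_def)
qed

lemma frequent_modular_ge:
  assumes f: "disj_normalized Phi0 f"
  shows "\<exists>\<kappa>>0. \<forall>k N. \<exists>n\<ge>N. ennreal (\<kappa> / 2^k) \<le> orlicz_modular Phi0 (f n) (2^k)"
proof (cases "\<exists>Q. \<forall>S N. \<exists>n\<ge>N. ennreal (1/4) \<le> doubling.value_modular cluster_exponents (f n) (small_range Q \<inter> {S..})")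
  case True
  then obtain Q where "\<And>S N. \<exists>n\<ge>N. ennreal (1/4) \<le> doubling.value_modular cluster_exponents (f n) (small_range Q \<inter> {S..})"
    by blast
  with frequent_modular_ge_small_clusters[where f=f and Q=Q] disj_normalizedD(1)[OF f] show ?thesis
    by (intro exI[of _ "1 / 2^Q / 16"]) auto
next
  case False
  then have "\<And>k. \<exists>S N. \<forall>n\<ge>N. doubling.value_modular cluster_exponents (f n) (small_range (k+2) \<inter> {S..}) < ennreal (1/4)"
    by (metis not_le)
  with frequent_modular_ge_large_clusters[where f=f, OF f] show ?thesis
    by (intro exI[of _ "1/16"]) (metis divide_pos_pos zero_less_numeral zero_less_one)
qed

lemma subseq_with_property:
  fixes P :: "nat \<Rightarrow> nat \<Rightarrow> bool"
  assumes "\<And>k N. \<exists>n\<ge>N. P k n"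
  shows "\<exists>r. strict_mono r \<and> (\<forall>k. P k (r k))"
proof -
  have start: "\<exists>n. P 0 n" using assms[where k=0 and N=0] by blast
  have step: "\<exists>m. P (Suc k) m \<and> n < m" if "P k n" for k n
    using assms[where k="Suc k" and N="Suc n"] by (auto simp: Suc_le_eq)
  obtain r where "\<forall>k. P k (r k) \<and> r k < r (Suc k)"
    using dependent_nat_choice[of P "\<lambda>k n m. n < m", OF start step] by blast
  then show ?thesis by (auto intro: strict_monoI_Suc)
qed

lemma one_DH_Phi0: "one_DH Phi0"
  unfolding one_DH_def
proof (intro allI impI)
  fix f assume f: "disj_normalized Phi0 f"
  obtain \<kappa> where "0 < \<kappa>" and frequent: "\<And>k N. \<exists>n\<ge>N. ennreal (\<kappa> / 2^k) \<le> orlicz_modular Phi0 (f n) (2^k)"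
    using frequent_modular_ge[OF f] by blast
  obtain r where r: "strict_mono r" "\<And>k. ennreal (\<kappa> / 2^k) \<le> orlicz_modular Phi0 (f (r k)) (2^k)"
    using subseq_with_property[where P="\<lambda>k n. ennreal (\<kappa> / 2^k) \<le> orlicz_modular Phi0 (f n) (2^k)"] frequent
    by blast
  have "l1_equiv Phi0 (f \<circ> r) ((1 + 2*\<kappa>) / \<kappa>)"
    by (rule doubling.l1_equiv_if_modular_ge[OF disj_normalized_subseq[OF f r(1)] \<open>0 < \<kappa>\<close>]) (simp add: r(2))
  then show "\<exists>r C. strict_mono r \<and> C > 0 \<and> l1_equiv Phi0 (f \<circ> r) C"
    using r(1) \<open>0 < \<kappa>\<close> by (intro exI conjI) auto
qed

lemma modular_scaled_indicator_le_1_iff: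
  assumes A: "A \<in> sets I01" and mA: "emeasure I01 A = ennreal (1 / doubling_orlicz E h)"
    and "0 < h" "0 < a" "0 < l"
  shows "orlicz_modular (doubling_orlicz E) (\<lambda>x. a * indicator A x) l \<le> 1 \<longleftrightarrow> a / h \<le> l"
proof -
  have P: "0 < doubling_orlicz E h" by (rule doubling_orlicz_pos) fact
  have "orlicz_modular (doubling_orlicz E) (\<lambda>x. a * indicator A x) l
      = ennreal (doubling_orlicz E (a / l)) * ennreal (1 / doubling_orlicz E h)"
    using doubling.modular_indicator[OF A, of a l] assms mA by simp
  also have "\<dots> = ennreal (doubling_orlicz E (a / l) / doubling_orlicz E h)"
    using P doubling_orlicz_nonneg[of "a/l" E] assms by (simp add: ennreal_mult[symmetric])
  finally have "orlicz_modular (doubling_orlicz E) (\<lambda>x. a * indicator A x) l \<le> 1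
      \<longleftrightarrow> doubling_orlicz E (a / l) \<le> doubling_orlicz E h"
    using P by (metis divide_le_eq_1_pos ennreal_1 ennreal_le_iff zero_le_one)
  also have "\<dots> \<longleftrightarrow> a / l \<le> h"
    using doubling_orlicz_strict_mono[of h "a/l" E] monoD[OF doubling_orlicz_mono, of "a/l" h E]
    by (meson not_le)
  also have "\<dots> \<longleftrightarrow> a / h \<le> l" using assms by (simp add: field_simps)
  finally show ?thesis .
qed

lemma lux_norm_scaled_indicator:
  assumes A: "A \<in> sets I01" and mA: "emeasure I01 A = ennreal (1 / doubling_orlicz E h)"
    and h: "0 < h" and a: "0 < a"
  shows "lux_norm (doubling_orlicz E) (\<lambda>x. a * indicator A x) = a / h"
proof (rule antisym)
  note iff = modular_scaled_indicator_le_1_iff[OF A mA h a]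
  show "lux_norm (doubling_orlicz E) (\<lambda>x. a * indicator A x) \<le> a / h"
  proof (rule doubling.lux_norm_le)
    fix l assume "a / h < l"
    moreover have "0 < a / h" using a h by simp
    ultimately show "orlicz_modular (doubling_orlicz E) (\<lambda>x. a * indicator A x) l \<le> 1"
      using iff[of l] by simp
  qed (use a h in simp)
  show "a / h \<le> lux_norm (doubling_orlicz E) (\<lambda>x. a * indicator A x)"
  proof (rule doubling.lux_norm_ge)
    show "\<exists>l>0. orlicz_modular (doubling_orlicz E) (\<lambda>x. a * indicator A x) l \<le> 1"
      using iff[of "a/h"] a h by (intro exI[of _ "a/h"]) auto
  qed (use iff in \<open>auto simp: not_le[symmetric]\<close>)
qed

lemma chi_bar_eq_scaled_indicator:
  assumes A: "A \<in> sets I01" and mA: "emeasure I01 A = ennreal (1 / doubling_orlicz E h)" and h: "0 < h"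
  shows "chi_bar (doubling_orlicz E) A = (\<lambda>x. h * indicator A x)"
proof -
  have norm: "lux_norm (doubling_orlicz E) (indicator A) = 1 / h"
    using lux_norm_scaled_indicator[OF A mA h, of 1] by simp
  show ?thesis unfolding chi_bar_def norm by (simp add: mult.commute)
qed

lemma disj_normalized_chi_bar:
  assumes "disjoint_family A" and A: "\<And>n. A n \<in> sets I01"
    and h: "\<And>n. 0 < h n" "\<And>n. emeasure I01 (A n) = ennreal (1 / doubling_orlicz E (h n))"
  shows "disj_normalized (doubling_orlicz E) (\<lambda>n. chi_bar (doubling_orlicz E) (A n))"
  unfolding disj_normalized_def
proof (intro conjI allI impI)
  fix n
  note An = A[of n] h(2)[of n] h(1)[of n]
  note eq = chi_bar_eq_scaled_indicator[OF An]
  have "orlicz_modular (doubling_orlicz E) (\<lambda>x. h n * indicator (A n) x) 1 \<le> 1"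
    using modular_scaled_indicator_le_1_iff[OF An h(1)[of n] zero_less_one] h(1)[of n] by simp
  then show "chi_bar (doubling_orlicz E) (A n) \<in> orlicz_space (doubling_orlicz E)"
    unfolding eq orlicz_space_def using A[of n] h(1)[of n] by (auto intro!: exI[of _ 1])
  show "lux_norm (doubling_orlicz E) (chi_bar (doubling_orlicz E) (A n)) = 1"
    unfolding eq using lux_norm_scaled_indicator[OF An h(1)[of n]] h(1)[of n] by simp
next
  fix n m :: nat assume "n \<noteq> m"
  then have "A n \<inter> A m = {}" using assms(1) by (auto simp: disjoint_family_on_def)
  then show "AE x in I01. chi_bar (doubling_orlicz E) (A n) x = 0 \<or> chi_bar (doubling_orlicz E) (A m) x = 0"
    by (intro AE_I2) (auto simp: chi_bar_def indicator_def)
qed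

lemma l1_equiv_le_lux_norm_sum:
  assumes "l1_equiv \<Phi> x C"
  shows "real m / C \<le> lux_norm \<Phi> (\<lambda>t. \<Sum>k<m. x k t)"
proof -
  have "\<forall>c. 1 / C * (\<Sum>k<m. \<bar>c k\<bar>) \<le> lux_norm \<Phi> (\<lambda>t. \<Sum>k<m. c k * x k t)"
    using assms unfolding l1_equiv_def by blast
  from spec[OF this, of "\<lambda>_. 1"] show ?thesis by simp
qed

definition block_height :: "nat \<Rightarrow> real" where
  "block_height j = 2^(cluster_start j + cluster_size j * cluster_size j + 2)"

text \<open>Measure \<open>1 / Phi0 (block_height j)\<close>, so the normalized indicator has height \<open>block_height j\<close>.\<close>
definition block :: "nat \<Rightarrow> real set" where
  "block j = {1 / 2^(j+1) ..< 1 / 2^(j+1) + 1 / Phi0 (block_height j)}"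

lemma block_height_pos: "0 < block_height j"
  by (simp add: block_height_def)

text \<open>All \<open>cluster_size j\<close> breakpoints of cluster \<open>j\<close> lie between \<open>2^cluster_start j\<close> and
  \<open>block_height j / 2\<close>.\<close>
lemma Phi0_cluster_start_le:
  "Phi0 (2^(cluster_start j)) \<le> 2 / 2^(cluster_size j * cluster_size j + 2) / 2^(cluster_size j) * Phi0 (block_height j)"
proof -
  define q where "q = cluster_size j"
  define x :: real where "x = 2^(cluster_start j)"
  define h where "h = block_height j"
  have h: "h = x * 2^(q*q+2)" unfolding h_def block_height_def x_def q_def by (simp add: power_add)
  have x: "0 < x" "x \<le> h / 2" unfolding h using one_le_power[of "2::real" "q*q+1"] by (auto simp: x_def)
  have sub: "cluster j \<subseteq> {e\<in>cluster_exponents. x \<le> 2^e \<and> (2::real)^e < h / 2}"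
  proof
    fix e assume e: "e \<in> cluster j"
    have "(2::real)^e \<le> 2^(cluster_start j + q*q)"
      using cluster_bounds[OF e] by (intro power_increasing) (auto simp: q_def)
    also have "\<dots> < h / 2" by (simp add: h_def block_height_def q_def power_add)
    finally show "e \<in> {e\<in>cluster_exponents. x \<le> 2^e \<and> (2::real)^e < h / 2}"
      using e cluster_bounds[OF e] by (auto simp: x_def cluster_exponents_def intro: power_increasing)
  qed
  have "finite {e\<in>cluster_exponents. x \<le> 2^e \<and> (2::real)^e < h / 2}"
    by (rule finite_subset[OF _ finite_breakpoints[of cluster_exponents "h/2"]]) (auto simp: breakpoints_def)
  from card_mono[OF this sub] have "q \<le> card {e\<in>cluster_exponents. x \<le> 2^e \<and> (2::real)^e < h / 2}"
    by (simp add: card_cluster q_def)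
  then have "card (breakpoints cluster_exponents x) + q \<le> card (breakpoints cluster_exponents (h / 2))"
    using card_breakpoints_split[OF x(2)] by simp
  then have "(2::real)^(card (breakpoints cluster_exponents x)) * 2^q \<le> 2^(card (breakpoints cluster_exponents (h / 2)))"
    by (simp add: power_add[symmetric])
  then have "Phi0 x * 2^q \<le> x * 2^(card (breakpoints cluster_exponents (h / 2)))"
    using doubling_orlicz_le[of x cluster_exponents] x
    by (smt (verit, best) mult.assoc mult_left_mono mult_right_mono zero_le_power)
  also have "\<dots> = 2 / 2^(q*q+2) * ((h - h / 2) * 2^(card (breakpoints cluster_exponents (h / 2))))"
    unfolding h by (simp add: field_simps)
  also have "\<dots> \<le> 2 / 2^(q*q+2) * Phi0 h"
    using doubling_orlicz_ge_breakpoints[of "h/2" h cluster_exponents] x by (intro mult_left_mono) auto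
  finally show ?thesis unfolding x_def h_def q_def by (simp add: field_simps)
qed

lemma block_length_le: "1 / Phi0 (block_height j) \<le> 1 / 2^(j+1)"
proof -
  have "(2::real)^(j+1) \<le> block_height j"
    unfolding block_height_def using less_cluster_start[of j] by (intro power_increasing) auto
  also have "\<dots> \<le> Phi0 (block_height j)" by (rule doubling_orlicz_ge)
  finally show ?thesis
    using doubling_orlicz_pos[OF block_height_pos, of cluster_exponents j] by (intro divide_left_mono) auto
qed

lemma block_subset: "block j \<subseteq> {1 / 2^(j+1) ..< 1 / 2^j}"
  using block_length_le[of j] by (auto simp: block_def)

lemma block_subset_01: "block j \<subseteq> {0..1}"
proof -
  have "{1 / 2^(j+1) ..< 1 / 2^j} \<subseteq> {0..(1::real)}"
  proof
    fix x :: real assume x: "x \<in> {1 / 2^(j+1) ..< 1 / 2^j}"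
    have "0 \<le> (1::real) / 2^(j+1)" "(1::real) / 2^j \<le> 1" by simp_all
    with x have "0 \<le> x" "x \<le> 1" by (simp_all only: atLeastLessThan_iff) linarith+
    then show "x \<in> {0..1}" by simp
  qed
  then show ?thesis using block_subset[of j] by blast
qed

lemma block_lebesgue: "block j \<in> sets lebesgue"
  by (simp add: block_def)

lemma block_sets: "block j \<in> sets I01"
  using block_lebesgue block_subset_01 by (simp add: sets_restrict_space_iff)

lemma emeasure_lebesgue_block: "emeasure lebesgue (block j) = ennreal (1 / Phi0 (block_height j))"
  using doubling_orlicz_pos[OF block_height_pos, of cluster_exponents j] by (simp add: block_def)

lemma emeasure_block: "emeasure I01 (block j) = ennreal (1 / Phi0 (block_height j))"
  using block_subset_01 by (simp add: emeasure_restrict_space emeasure_lebesgue_block)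

lemma measure_lebesgue_block: "measure lebesgue (block j) = 1 / Phi0 (block_height j)"
  using doubling_orlicz_pos[OF block_height_pos, of cluster_exponents j]
  by (simp add: measure_def emeasure_lebesgue_block)

lemma disjoint_family_block: "disjoint_family block"
proof -
  have "block i \<inter> block j = {}" if "i < j" for i j
  proof -
    have "(1::real) / 2^j \<le> 1 / 2^(i+1)" using that by (intro divide_left_mono power_increasing) auto
    then show ?thesis using block_subset[of i] block_subset[of j] by fastforce
  qed
  then show ?thesis unfolding disjoint_family_on_def by (metis Int_commute linorder_neqE_nat)
qed

lemma modular_sum_blocks_le:
  fixes J :: "nat \<Rightarrow> nat"
  assumes "inj J" and q: "\<And>k. cluster_size (J k) = q"
  shows "orlicz_modular Phi0 (\<lambda>x. \<Sum>k<m. block_height (J k) * indicator (block (J k)) x) (2^(q*q+2))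
          \<le> ennreal (real m * (2 / 2^(q*q+2) / 2^q))"
proof -
  define L :: real where "L = 2^(q*q+2)"
  define B where "B = 2 / L / 2^q"
  have "orlicz_modular Phi0 (\<lambda>x. \<Sum>k<m. block_height (J k) * indicator (block (J k)) x) L
        = (\<Sum>k<m. orlicz_modular Phi0 (\<lambda>x. block_height (J k) * indicator (block (J k)) x) L)"
  proof (rule doubling.modular_sum_disjoint)
    show "AE x in I01. \<forall>k<m. \<forall>k'<m. k \<noteq> k' \<longrightarrow> block_height (J k) * indicator (block (J k)) x = 0
        \<or> block_height (J k') * indicator (block (J k')) x = 0"
      using disjoint_family_block injD[OF assms(1)]
      by (intro AE_I2) (auto simp: indicator_def disjoint_family_on_def)
  qed (use block_sets in measurable)
  also have "\<dots> \<le> (\<Sum>k<m. ennreal B)"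
  proof (rule sum_mono)
    fix k
    have "block_height (J k) / L = 2^(cluster_start (J k))"
      unfolding block_height_def L_def q[of k] by (simp add: power_add)
    then have "orlicz_modular Phi0 (\<lambda>x. block_height (J k) * indicator (block (J k)) x) L
        = ennreal (Phi0 (2^(cluster_start (J k)))) * ennreal (1 / Phi0 (block_height (J k)))"
      using doubling.modular_indicator[OF block_sets, of "block_height (J k)" L] block_height_pos[of "J k"]
      by (simp add: L_def emeasure_block)
    also have "\<dots> = ennreal (Phi0 (2^(cluster_start (J k))) / Phi0 (block_height (J k)))"
      using doubling_orlicz_pos[OF block_height_pos, of cluster_exponents "J k"]
      by (subst ennreal_mult[symmetric]) (auto simp: doubling_orlicz_nonneg)
    also have "\<dots> \<le> ennreal B"
      using Phi0_cluster_start_le[of "J k"] doubling_orlicz_pos[OF block_height_pos, of cluster_exponents "J k"]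
      by (intro ennreal_leI) (simp add: B_def L_def q divide_le_eq)
    finally show "orlicz_modular Phi0 (\<lambda>x. block_height (J k) * indicator (block (J k)) x) L \<le> ennreal B" .
  qed
  also have "\<dots> = ennreal (real m) * ennreal B" by (simp add: ennreal_of_nat_eq_real_of_nat)
  also have "\<dots> = ennreal (real m * B)" by (rule ennreal_mult[symmetric]) (auto simp: B_def L_def)
  finally show ?thesis unfolding L_def B_def .
qed

lemma lux_norm_sum_blocks_le:
  fixes J :: "nat \<Rightarrow> nat"
  assumes "inj J" "\<And>k. cluster_size (J k) = q" and m: "real m * (2 / 2^(q*q+2) / 2^q) \<le> 1"
  shows "lux_norm Phi0 (\<lambda>x. \<Sum>k<m. block_height (J k) * indicator (block (J k)) x) \<le> 2^(q*q+2)"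
proof (rule doubling.lux_norm_le)
  fix l :: real assume l: "2^(q*q+2) < l"
  have "orlicz_modular Phi0 (\<lambda>x. \<Sum>k<m. block_height (J k) * indicator (block (J k)) x) l
      \<le> orlicz_modular Phi0 (\<lambda>x. \<Sum>k<m. block_height (J k) * indicator (block (J k)) x) (2^(q*q+2))"
    using l by (intro doubling.modular_antimono) auto
  also have "\<dots> \<le> ennreal (real m * (2 / 2^(q*q+2) / 2^q))" by (rule modular_sum_blocks_le[OF assms(1,2)])
  also have "\<dots> \<le> 1" using m by (simp add: ennreal_le_1)
  finally show "orlicz_modular Phi0 (\<lambda>x. \<Sum>k<m. block_height (J k) * indicator (block (J k)) x) l \<le> 1" .
qed simp

text \<open>Blocks over the clusters with \<open>cluster_size = q + 1\<close>.\<close>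
definition equal_size_blocks :: "nat \<Rightarrow> nat \<Rightarrow> real set" where
  "equal_size_blocks q n = block (prod_encode (q, n))"

lemma equal_size_blocks_admissible:
  "equal_size_blocks q n \<in> sets lebesgue \<and> equal_size_blocks q n \<subseteq> {0..1} \<and> measure lebesgue (equal_size_blocks q n) > 0"
  using doubling_orlicz_pos[OF block_height_pos]
  by (simp add: equal_size_blocks_def block_lebesgue block_subset_01 measure_lebesgue_block)

lemma disjoint_family_equal_size_blocks: "disjoint_family (equal_size_blocks q)"
  using disjoint_family_block strict_mono_eq[OF strict_mono_prod_encode_snd]
  by (auto simp: equal_size_blocks_def disjoint_family_on_def)

lemma disj_normalized_equal_size_blocks:
  "disj_normalized Phi0 (\<lambda>n. chi_bar Phi0 (equal_size_blocks q n))"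
  by (rule disj_normalized_chi_bar[OF disjoint_family_equal_size_blocks])
    (auto simp: equal_size_blocks_def block_sets emeasure_block block_height_pos)

text \<open>\<open>m\<close> normalized indicators over clusters of one size \<open>q\<close> have sum of norm at most
  \<open>2^(q^2 + 2)\<close>, however large \<open>m \<le> 2^(q^2 + q + 1)\<close> is.\<close>
lemma equal_size_blocks_no_lower_estimate:
  assumes c: "0 < c"
  shows "\<exists>q. \<forall>r. strict_mono r \<longrightarrow>
    (\<exists>m::nat. m \<ge> 1 \<and> lux_norm Phi0 (\<lambda>x. \<Sum>k<m. chi_bar Phi0 (equal_size_blocks q (r k)) x) < c * real m)"
proof -
  obtain q0 where "2 / c + 1 < (2::real)^q0" using real_arch_pow[of 2 "2/c+1"] by auto
  moreover have "(2::real)^q0 \<le> 2^(q0+1)" by (intro power_increasing) auto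
  ultimately have q: "2 / c + 1 \<le> (2::real)^(q0+1)" by linarith
  define q where "q = q0 + 1"
  define L :: real where "L = 2^(q*q+2)"
  define m where "m = nat \<lfloor>L / c\<rfloor> + 1"
  have L: "4 \<le> L" unfolding L_def by (simp add: power_add)
  have "L / c < real m" "real m \<le> L / c + 1" unfolding m_def using c L by (linarith, simp add: of_nat_nat)
  then have m: "L < c * real m" "real m \<le> L / c + 1" using c by (auto simp: field_simps)
  have "real m * (2 / L) \<le> (L / c + 1) * (2 / L)" using m(2) L by (intro mult_right_mono) auto
  also have "\<dots> = 2 / c + 2 / L" using L by (simp add: field_simps)
  also have "\<dots> \<le> 2 / c + 1" using L by simp
  also have "\<dots> \<le> 2^q" using q by (simp add: q_def)
  finally have "real m * (2 / L) \<le> 2^q" .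
  then have "real m * (2 / L) / 2^q \<le> 2^q / 2^q" by (intro divide_right_mono) auto
  then have bound: "real m * (2 / L / 2^q) \<le> 1" by simp
  show ?thesis
  proof (rule exI[of _ q0], intro allI impI)
    fix r :: "nat \<Rightarrow> nat" assume r: "strict_mono r"
    define J where "J k = prod_encode (q0, r k)" for k
    have "inj J"
      using strict_mono_eq[OF r] by (auto simp: J_def inj_def prod_encode_eq)
    moreover have "chi_bar Phi0 (equal_size_blocks q0 (r k)) = (\<lambda>x. block_height (J k) * indicator (block (J k)) x)" for k
      unfolding J_def equal_size_blocks_def
      by (rule chi_bar_eq_scaled_indicator[OF block_sets emeasure_block block_height_pos])
    ultimately have "lux_norm Phi0 (\<lambda>x. \<Sum>k<m. chi_bar Phi0 (equal_size_blocks q0 (r k)) x) \<le> L"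
      using lux_norm_sum_blocks_le[of J q m] bound by (simp add: J_def L_def q_def cluster_size_prod_encode)
    then show "\<exists>m::nat. m \<ge> 1 \<and> lux_norm Phi0 (\<lambda>x. \<Sum>k<m. chi_bar Phi0 (equal_size_blocks q0 (r k)) x) < c * real m"
      using m(1) by (intro exI[of _ m]) (auto simp: m_def)
  qed
qed

lemma orlicz_function_Phi0: "orlicz_function Phi0"
  unfolding orlicz_function_def
proof (intro conjI)
  show "mono_on {0..} Phi0" using doubling_orlicz_mono by (simp add: mono_on_def monoD)
  show "convex_on {0..} Phi0" by (rule convex_on_subset[OF doubling_orlicz_convex]) auto
  show "filterlim Phi0 at_top at_top"
    by (rule filterlim_at_top_mono[OF filterlim_ident]) (auto simp: doubling_orlicz_ge)
qed simp

lemma not_uniform_one_DH_Phi0: "\<not> uniform_one_DH Phi0"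
proof
  assume "uniform_one_DH Phi0"
  then obtain C where "0 < C"
    and C: "\<And>f. disj_normalized Phi0 f \<Longrightarrow> \<exists>r. strict_mono r \<and> l1_equiv Phi0 (f \<circ> r) C"
    unfolding uniform_one_DH_def by blast
  obtain q where q: "\<And>r. strict_mono r \<Longrightarrow>
      \<exists>m::nat. m \<ge> 1 \<and> lux_norm Phi0 (\<lambda>x. \<Sum>k<m. chi_bar Phi0 (equal_size_blocks q (r k)) x) < 1 / C * real m"
    using equal_size_blocks_no_lower_estimate[of "1 / C"] \<open>0 < C\<close> by auto
  obtain r where "strict_mono r" and r: "l1_equiv Phi0 ((\<lambda>n. chi_bar Phi0 (equal_size_blocks q n)) \<circ> r) C"
    using C[OF disj_normalized_equal_size_blocks] by blast
  then obtain m :: nat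
    where "lux_norm Phi0 (\<lambda>x. \<Sum>k<m. chi_bar Phi0 (equal_size_blocks q (r k)) x) < 1 / C * real m"
    using q by blast
  with l1_equiv_le_lux_norm_sum[OF r, of m] show False by simp
qed

lemma Phi0_no_lower_estimate:
  "\<not> (\<exists>c>0. \<forall>E :: nat \<Rightarrow> real set.
          ((\<forall>n. E n \<in> sets lebesgue \<and> E n \<subseteq> {0..1} \<and> measure lebesgue (E n) > 0)
           \<and> disjoint_family E)
          \<longrightarrow> (\<exists>r. strict_mono r \<and>
                (\<forall>m::nat. m \<ge> 1 \<longrightarrow>
                   lux_norm Phi0 (\<lambda>x. \<Sum>k<m. chi_bar Phi0 (E (r k)) x) \<ge> c * real m)))"
  using equal_size_blocks_no_lower_estimate equal_size_blocks_admissible disjoint_family_equal_size_blocks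
  by (meson not_le)

theorem mainTheorem13:
  shows "\<exists>\<Phi>. orlicz_function \<Phi> \<and> one_DH \<Phi> \<and> \<not> uniform_one_DH \<Phi> \<and>
    \<not> (\<exists>c>0. \<forall>E :: nat \<Rightarrow> real set.
          ((\<forall>n. E n \<in> sets lebesgue \<and> E n \<subseteq> {0..1} \<and> measure lebesgue (E n) > 0)
           \<and> disjoint_family E)
          \<longrightarrow> (\<exists>r. strict_mono r \<and>
                (\<forall>m::nat. m \<ge> 1 \<longrightarrow>
                   lux_norm \<Phi> (\<lambda>x. \<Sum>k<m. chi_bar \<Phi> (E (r k)) x) \<ge> c * real m)))"
  using orlicz_function_Phi0 one_DH_Phi0 not_uniform_one_DH_Phi0 Phi0_no_lower_estimate by blast

end
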